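(* Let $n\ge 3$. Then for $0\le k<n-1$, $$f(n,k)=\sum_{j=k-1}^{n-2} f(n-1,j),$$ and $$f(n,n-1)=\sum_{j=0}^{n-4}(n-3-j)\,f(n-1,j),$$ with the convention $f(m,-1)=0$.
   Context: A complete non-ambiguous matrix (CNM) of size $n$ is an $n\times n$ matrix $M=(m_{i,j})$ with entries in $\{0,1\}$ whose support $T=\{(i,j): m_{i,j}=1\}$ (whose elements are called vertices) satisfies: (1) $(1,1)\in T$; (2) for every $p=(i,j)\in T$ with $p\neq(1,1)$, exactly one of the following holds: there is $(i',j)\in T$ with $i'<i$, or there is $(i,j')\in T$ with $j'<j$; (3) every row and every column of $M$ contains at least one vertex; (4) define the parent of $p=(i,j)\neq(1,1)$ to be $(i',j)$ with $i'<i$ maximal if such a vertex exists, and otherwise $(i,j')$ with $j'<j$ maximal; then every vertex is the parent of either zero or exactly two vertices. A vertex with no children is a leaf. A CNM of size $n$ is upper-diagonal if its leaves are exactly the positions $(i,n+1-i)$, $1\le i\le n$. For $n\ge 2$ and $0\le k\le n-2$, $f(n,k)$ is the number of upper-diagonal CNMs $M$ of size $n$ with $m_{i,n-i}=0$ for $1\le i\le k$ and $m_{k+1,n-k-1}=1$; $f(n,n-1)$ is the number of upper-diagonal CNMs of size $n$ with $m_{i,n-i}=0$ for all $1\le i\le n-1$; by convention $f(n,-1)=0$. *)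

theory Defs
  imports Main
begin

text \<open>A 0/1 matrix of size n is represented by its support T (the set of vertices),
  a subset of {1..n} x {1..n}; positions are (row, column), 1-based.\<close>

definition cnm_parent :: "(nat \<times> nat) set \<Rightarrow> nat \<times> nat \<Rightarrow> nat \<times> nat" where
  "cnm_parent T p = (case p of (i, j) \<Rightarrow>
     if (\<exists>i'<i. (i', j) \<in> T) then (Max {i'. i' < i \<and> (i', j) \<in> T}, j)
     else (i, Max {j'. j' < j \<and> (i, j') \<in> T}))"

definition cnm_children :: "(nat \<times> nat) set \<Rightarrow> nat \<times> nat \<Rightarrow> (nat \<times> nat) set" where
  "cnm_children T p = {q \<in> T. q \<noteq> (1, 1) \<and> cnm_parent T q = p}"

definition is_CNM :: "nat \<Rightarrow> (nat \<times> nat) set \<Rightarrow> bool" where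
  "is_CNM n T \<longleftrightarrow>
     T \<subseteq> {1..n} \<times> {1..n} \<and>
     (1, 1) \<in> T \<and>
     (\<forall>(i, j) \<in> T. (i, j) \<noteq> (1, 1) \<longrightarrow>
        ((\<exists>i'<i. (i', j) \<in> T) \<noteq> (\<exists>j'<j. (i, j') \<in> T))) \<and>
     (\<forall>i \<in> {1..n}. \<exists>j. (i, j) \<in> T) \<and>
     (\<forall>j \<in> {1..n}. \<exists>i. (i, j) \<in> T) \<and>
     (\<forall>p \<in> T. card (cnm_children T p) = 0 \<or> card (cnm_children T p) = 2)"

definition cnm_leaves :: "(nat \<times> nat) set \<Rightarrow> (nat \<times> nat) set" where
  "cnm_leaves T = {p \<in> T. cnm_children T p = {}}"

definition is_upper_diagonal_CNM :: "nat \<Rightarrow> (nat \<times> nat) set \<Rightarrow> bool" where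
  "is_upper_diagonal_CNM n T \<longleftrightarrow> is_CNM n T \<and>
     cnm_leaves T = {(i, n + 1 - i) | i. 1 \<le> i \<and> i \<le> n}"

definition f :: "nat \<Rightarrow> int \<Rightarrow> nat" where
  "f n k = (if k < 0 then 0
     else if k \<le> int n - 2 then
       card {T. is_upper_diagonal_CNM n T \<and>
                (\<forall>i \<in> {1..nat k}. (i, n - i) \<notin> T) \<and>
                (nat k + 1, n - nat k - 1) \<in> T}
     else if k = int n - 1 then
       card {T. is_upper_diagonal_CNM n T \<and> (\<forall>i \<in> {1..n - 1}. (i, n - i) \<notin> T)}
     else 0)"

end

theory Submission
  imports Defs Complex_Main
begin

(* An upper-diagonal CNM of size n is the same thing as a set T of cells of the staircase
   i + j \<le> n + 1 that contains (1, 1) and the whole antidiagonal i + j = n + 1, and in which every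
   vertex other than (1, 1) has a vertex above it or to its left, but not both: the antidiagonal
   cells are then exactly the leaves.

   For k < n - 1 the vertex (k + 1, n - k - 1), when present, is the parent of the two leaves
   (k + 2, n - k - 1) and (k + 1, n - k).  Deleting row k + 2 and column n - k removes this cherry,
   and this is a bijection onto the upper-diagonal CNMs of size n - 1 avoiding the cells
   (i, n - 1 - i) for i < k.  Sorting those by the first such cell they contain gives the first
   recurrence.

   For the second, f(n, n - 1) is the number of all upper-diagonal CNMs of size n, which is
   (n - 1)!, minus the sum of f(n, k) over k < n - 1.  The count (n - 1)! comes from peeling off
   the top row: what remains is a forest hanging from the columns used so far, and the number of
   such forests is a product over the unused columns, by induction on the size. *)

lemma Max_less_eq_iff:
  fixes x a :: nat
  assumes "\<exists>i<x. P i"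
  shows "Max {i. i < x \<and> P i} = a \<longleftrightarrow> a < x \<and> P a \<and> (\<forall>z. a < z \<and> z < x \<longrightarrow> \<not> P z)"
proof -
  have "finite {i. i < x \<and> P i}" "{i. i < x \<and> P i} \<noteq> {}"
    using assms by auto
  then show ?thesis
    by (auto simp: Max_eq_iff) (meson not_le)+
qed

lemma Least_eq_iff:
  fixes k y :: nat
  assumes "P k"
  shows "(LEAST x. P x) = y \<longleftrightarrow> P y \<and> (\<forall>z<y. \<not> P z)"
  using assms by (metis LeastI Least_le leD linorder_neqE_nat)

section \<open>Upper-diagonal CNMs as staircases\<close>

definition ud_shape :: "nat \<Rightarrow> (nat \<times> nat) set \<Rightarrow> bool" where
  "ud_shape n T \<longleftrightarrow> T \<subseteq> {(i, j). 1 \<le> i \<and> 1 \<le> j \<and> i + j \<le> Suc n} \<and> (1, 1) \<in> T \<and>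
     (\<forall>i. 1 \<le> i \<and> i \<le> n \<longrightarrow> (i, Suc n - i) \<in> T) \<and>
     (\<forall>i j. (i, j) \<in> T \<longrightarrow> (i, j) \<noteq> (1, 1) \<longrightarrow>
        (\<exists>i'<i. (i', j) \<in> T) \<noteq> (\<exists>j'<j. (i, j') \<in> T))"

lemma ud_shapeI:
  assumes "\<And>i j. (i, j) \<in> T \<Longrightarrow> 1 \<le> i \<and> 1 \<le> j \<and> i + j \<le> Suc n"
    and "(1, 1) \<in> T"
    and "\<And>i. 1 \<le> i \<Longrightarrow> i \<le> n \<Longrightarrow> (i, Suc n - i) \<in> T"
    and "\<And>i j. (i, j) \<in> T \<Longrightarrow> (i, j) \<noteq> (1, 1) \<Longrightarrow>
           (\<exists>i'<i. (i', j) \<in> T) \<noteq> (\<exists>j'<j. (i, j') \<in> T)"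
  shows "ud_shape n T"
  unfolding ud_shape_def using assms by blast

lemma ud_shape_cell: "ud_shape n T \<Longrightarrow> (i, j) \<in> T \<Longrightarrow> 1 \<le> i \<and> 1 \<le> j \<and> i + j \<le> Suc n"
  unfolding ud_shape_def by auto

lemma ud_shape_root: "ud_shape n T \<Longrightarrow> (1, 1) \<in> T"
  unfolding ud_shape_def by blast

lemma ud_shape_antidiagonal: "ud_shape n T \<Longrightarrow> 1 \<le> i \<Longrightarrow> i \<le> n \<Longrightarrow> (i, Suc n - i) \<in> T"
  unfolding ud_shape_def by blast

lemma ud_shape_above_xor_left:
  "ud_shape n T \<Longrightarrow> (i, j) \<in> T \<Longrightarrow> (i, j) \<noteq> (1, 1) \<Longrightarrow>
     (\<exists>i'<i. (i', j) \<in> T) \<noteq> (\<exists>j'<j. (i, j') \<in> T)"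
  unfolding ud_shape_def by blast

lemma finite_ud_shape: "finite {T. ud_shape n T}"
proof (rule finite_subset)
  show "{T. ud_shape n T} \<subseteq> Pow ({1..n} \<times> {1..n})"
    by (fastforce dest: ud_shape_cell)
qed simp

lemma cnm_children_iff:
  assumes T: "ud_shape n T" and ab: "(a, b) \<in> T"
  shows "(x, y) \<in> cnm_children T (a, b) \<longleftrightarrow> (x, y) \<in> T \<and>
     (y = b \<and> a < x \<and> (\<forall>z. a < z \<and> z < x \<longrightarrow> (z, b) \<notin> T) \<or>
      x = a \<and> b < y \<and> (\<forall>z. b < z \<and> z < y \<longrightarrow> (a, z) \<notin> T))"
proof (cases "(x, y) \<in> T \<and> (x, y) \<noteq> (1, 1)")
  case False
  then have "(x, y) \<notin> cnm_children T (a, b)"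
    unfolding cnm_children_def by blast
  moreover have "1 \<le> a" "1 \<le> b"
    using ud_shape_cell[OF T ab] by auto
  ultimately show ?thesis
    using False by (cases "(x, y) \<in> T") force+
next
  case True
  then have child: "(x, y) \<in> cnm_children T (a, b) \<longleftrightarrow> cnm_parent T (x, y) = (a, b)"
    unfolding cnm_children_def by blast
  from True have xor: "(\<exists>i'<x. (i', y) \<in> T) \<longleftrightarrow> \<not> (\<exists>j'<y. (x, j') \<in> T)"
    using ud_shape_above_xor_left[OF T] by blast
  show ?thesis
  proof (cases "\<exists>i'<x. (i', y) \<in> T")
    case above: True
    then have "\<not> (x = a \<and> b < y)"
      using xor ab by blast
    moreover have "cnm_parent T (x, y) = (Max {i'. i' < x \<and> (i', y) \<in> T}, y)"
      using above by (simp add: cnm_parent_def)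
    ultimately show ?thesis
      using True ab by (auto simp: child Max_less_eq_iff[OF above])
  next
    case no_above: False
    then have left: "\<exists>j'<y. (x, j') \<in> T"
      using xor by blast
    have "\<not> (y = b \<and> a < x)"
      using ab no_above by blast
    moreover have "cnm_parent T (x, y) = (x, Max {j'. j' < y \<and> (x, j') \<in> T})"
      unfolding cnm_parent_def using no_above by auto
    ultimately show ?thesis
      using True ab by (auto simp: child Max_less_eq_iff[OF left])
  qed
qed

lemma cnm_children_antidiagonal:
  assumes T: "ud_shape n T" and ab: "(a, b) \<in> T" "a + b = Suc n"
  shows "cnm_children T (a, b) = {}"
  using ud_shape_cell[OF T] ab by (fastforce simp: cnm_children_iff[OF T ab(1)])

lemma card_cnm_children_inner:
  assumes T: "ud_shape n T" and ab: "(a, b) \<in> T" "a + b \<le> n"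
  shows "card (cnm_children T (a, b)) = 2"
proof -
  have "1 \<le> a" "1 \<le> b"
    using ud_shape_cell[OF T ab(1)] by auto
  then have below: "a < Suc n - b \<and> (Suc n - b, b) \<in> T"
    and right: "b < Suc n - a \<and> (a, Suc n - a) \<in> T"
    using ud_shape_antidiagonal[OF T, of "Suc n - b"] ud_shape_antidiagonal[OF T, of a] ab(2)
    by auto
  define x0 where "x0 = (LEAST x. a < x \<and> (x, b) \<in> T)"
  define y0 where "y0 = (LEAST y. b < y \<and> (a, y) \<in> T)"
  have x0_iff: "x = x0 \<longleftrightarrow> a < x \<and> (x, b) \<in> T \<and> (\<forall>z. a < z \<and> z < x \<longrightarrow> (z, b) \<notin> T)" for x
    unfolding x0_def
    by (subst eq_commute) (auto simp: Least_eq_iff[where P = "\<lambda>x. a < x \<and> (x, b) \<in> T", OF below])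
  moreover have y0_iff: "y = y0 \<longleftrightarrow> b < y \<and> (a, y) \<in> T \<and> (\<forall>z. b < z \<and> z < y \<longrightarrow> (a, z) \<notin> T)" for y
    unfolding y0_def
    by (subst eq_commute) (auto simp: Least_eq_iff[where P = "\<lambda>y. b < y \<and> (a, y) \<in> T", OF right])
  have "(x, y) \<in> cnm_children T (a, b) \<longleftrightarrow> (x, y) \<in> {(x0, b), (a, y0)}" for x y
    by (auto simp: cnm_children_iff[OF T ab(1)] x0_iff y0_iff)
  then have "cnm_children T (a, b) = {(x0, b), (a, y0)}"
    by auto
  moreover have "x0 \<noteq> a"
    using x0_iff by blast
  ultimately show ?thesis
    by simp
qed

lemma ud_shape_imp_upper_diagonal_CNM:
  assumes T: "ud_shape n T"
  shows "is_upper_diagonal_CNM n T"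
proof -
  have inner_or_leaf: "a + b \<le> n \<or> a + b = Suc n" if "(a, b) \<in> T" for a b
    using ud_shape_cell[OF T that] by linarith
  have "cnm_children T (a, b) = {} \<longleftrightarrow> a + b = Suc n" if "(a, b) \<in> T" for a b
    using inner_or_leaf[OF that] card_cnm_children_inner[OF T that]
      cnm_children_antidiagonal[OF T that]
    by fastforce
  then have "cnm_leaves T = {(a, b). (a, b) \<in> T \<and> a + b = Suc n}"
    unfolding cnm_leaves_def by blast
  also have "\<dots> = {(i, n + 1 - i) | i. 1 \<le> i \<and> i \<le> n}"
    using ud_shape_cell[OF T] ud_shape_antidiagonal[OF T] by force
  finally have leaves: "cnm_leaves T = {(i, n + 1 - i) | i. 1 \<le> i \<and> i \<le> n}" .
  have cols: "\<forall>j \<in> {1..n}. \<exists>i. (i, j) \<in> T"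
  proof
    fix j :: nat
    assume "j \<in> {1..n}"
    then have "(Suc n - j, Suc n - (Suc n - j)) \<in> T"
      by (intro ud_shape_antidiagonal[OF T]) auto
    moreover have "Suc n - (Suc n - j) = j"
      using \<open>j \<in> {1..n}\<close> by simp
    ultimately show "\<exists>i. (i, j) \<in> T"
      by auto
  qed
  have "\<forall>p \<in> T. card (cnm_children T p) = 0 \<or> card (cnm_children T p) = 2"
    using inner_or_leaf card_cnm_children_inner[OF T] cnm_children_antidiagonal[OF T] by fastforce
  moreover have "T \<subseteq> {1..n} \<times> {1..n}"
    using ud_shape_cell[OF T] by fastforce
  moreover have "\<forall>i \<in> {1..n}. \<exists>j. (i, j) \<in> T"
    using ud_shape_antidiagonal[OF T] by (meson atLeastAtMost_iff)
  moreover have "\<forall>(i, j) \<in> T. (i, j) \<noteq> (1, 1) \<longrightarrow>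
      ((\<exists>i'<i. (i', j) \<in> T) \<noteq> (\<exists>j'<j. (i, j') \<in> T))"
    using ud_shape_above_xor_left[OF T] by blast
  ultimately show ?thesis
    unfolding is_upper_diagonal_CNM_def is_CNM_def
    using leaves cols ud_shape_root[OF T] by blast
qed

lemma cnm_parent_mem_sum_less:
  assumes "(\<exists>i'<i. (i', j) \<in> T) \<or> (\<exists>j'<j. (i, j') \<in> T)"
  shows "cnm_parent T (i, j) \<in> T \<and> fst (cnm_parent T (i, j)) + snd (cnm_parent T (i, j)) < i + j"
proof (cases "\<exists>i'<i. (i', j) \<in> T")
  case True
  have "Max {i'. i' < i \<and> (i', j) \<in> T} \<in> {i'. i' < i \<and> (i', j) \<in> T}"
    using True by (intro Max_in) auto
  then show ?thesis
    using True by (simp add: cnm_parent_def)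
next
  case False
  then have "cnm_parent T (i, j) = (i, Max {j'. j' < j \<and> (i, j') \<in> T})"
    unfolding cnm_parent_def by auto
  moreover have "Max {j'. j' < j \<and> (i, j') \<in> T} \<in> {j'. j' < j \<and> (i, j') \<in> T}"
    using False assms by (intro Max_in) auto
  ultimately show ?thesis
    by simp
qed

text \<open>A vertex with maximal i + j has no children, so it is a leaf and lies on the antidiagonal.\<close>
lemma upper_diagonal_CNM_staircase:
  assumes U: "is_upper_diagonal_CNM n T" and ij: "(i, j) \<in> T"
  shows "i + j \<le> Suc n"
proof -
  have C: "is_CNM n T" and leaves: "cnm_leaves T = {(i, n + 1 - i) | i. 1 \<le> i \<and> i \<le> n}"
    using U unfolding is_upper_diagonal_CNM_def by auto
  have "finite T"
    using C unfolding is_CNM_def by (meson finite_SigmaI finite_atLeastAtMost finite_subset)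
  then have "Max ((\<lambda>(x, y). x + y) ` T) \<in> (\<lambda>(x, y). x + y) ` T"
    using ij by (intro Max_in) auto
  then obtain a b where ab: "(a, b) \<in> T" and "a + b = Max ((\<lambda>(x, y). x + y) ` T)"
    by auto
  with \<open>finite T\<close> have ab_max: "x + y \<le> a + b" if "(x, y) \<in> T" for x y
    using that by (metis (no_types, lifting) Max_ge case_prod_conv finite_imageI image_eqI)
  have "cnm_children T (a, b) = {}"
  proof (rule ccontr)
    assume "cnm_children T (a, b) \<noteq> {}"
    then obtain x y where "(x, y) \<in> T" "(x, y) \<noteq> (1, 1)" "cnm_parent T (x, y) = (a, b)"
      unfolding cnm_children_def by auto
    then have "a + b < x + y"
      using C cnm_parent_mem_sum_less[of x y T] unfolding is_CNM_def by fastforce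
    then show False
      using ab_max[OF \<open>(x, y) \<in> T\<close>] by simp
  qed
  then have "(a, b) \<in> cnm_leaves T"
    using ab unfolding cnm_leaves_def by blast
  then have "a + b = Suc n"
    using leaves by auto
  then show ?thesis
    using ab_max[OF ij] by simp
qed

lemma upper_diagonal_CNM_imp_ud_shape:
  assumes U: "is_upper_diagonal_CNM n T"
  shows "ud_shape n T"
proof (rule ud_shapeI)
  have C: "is_CNM n T" and leaves: "cnm_leaves T = {(i, n + 1 - i) | i. 1 \<le> i \<and> i \<le> n}"
    using U unfolding is_upper_diagonal_CNM_def by auto
  show "1 \<le> i \<and> 1 \<le> j \<and> i + j \<le> Suc n" if "(i, j) \<in> T" for i j
    using C upper_diagonal_CNM_staircase[OF U that] that unfolding is_CNM_def by auto
  show "(1, 1) \<in> T"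
    using C unfolding is_CNM_def by blast
  show "(i, Suc n - i) \<in> T" if "1 \<le> i" "i \<le> n" for i
    using leaves that unfolding cnm_leaves_def by auto
  show "(\<exists>i'<i. (i', j) \<in> T) \<noteq> (\<exists>j'<j. (i, j') \<in> T)" if "(i, j) \<in> T" "(i, j) \<noteq> (1, 1)" for i j
    using C that unfolding is_CNM_def by blast
qed

theorem is_upper_diagonal_CNM_iff_ud_shape: "is_upper_diagonal_CNM n T \<longleftrightarrow> ud_shape n T"
  using upper_diagonal_CNM_imp_ud_shape ud_shape_imp_upper_diagonal_CNM by blast

section \<open>Removing a cherry\<close>

definition shift_from :: "nat \<Rightarrow> nat \<Rightarrow> nat" where
  "shift_from a x = (if a \<le> x then Suc x else x)"

definition unshift_from :: "nat \<Rightarrow> nat \<Rightarrow> nat" where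
  "unshift_from a x = (if a < x then x - 1 else x)"

lemma shift_from_less_iff[simp]: "shift_from a x < shift_from a y \<longleftrightarrow> x < y"
  unfolding shift_from_def by auto

lemma shift_from_eq_iff[simp]: "shift_from a x = shift_from a y \<longleftrightarrow> x = y"
  unfolding shift_from_def by auto

lemma shift_from_neq[simp]: "shift_from a x \<noteq> a"
  unfolding shift_from_def by auto

lemma unshift_shift_from[simp]: "unshift_from a (shift_from a x) = x"
  unfolding shift_from_def unshift_from_def by auto

lemma shift_unshift_from[simp]: "x \<noteq> a \<Longrightarrow> shift_from a (unshift_from a x) = x"
  unfolding shift_from_def unshift_from_def by auto

lemma unshift_from_less_iff: "x \<noteq> a \<Longrightarrow> y \<noteq> a \<Longrightarrow> unshift_from a x < unshift_from a y \<longleftrightarrow> x < y"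
  unfolding unshift_from_def by auto

lemma unshift_from_eq_iff: "x \<noteq> a \<Longrightarrow> y \<noteq> a \<Longrightarrow> unshift_from a x = unshift_from a y \<longleftrightarrow> x = y"
  unfolding unshift_from_def by auto

text \<open>Going from size m to size m + 1: open up a new row k + 2 and a new column m + 1 - k, and
  hang the two new leaves (k + 2, m - k) and (k + 1, m + 1 - k) below and to the right of the old
  leaf (k + 1, m - k).\<close>
definition add_cherry :: "nat \<Rightarrow> nat \<Rightarrow> (nat \<times> nat) set \<Rightarrow> (nat \<times> nat) set" where
  "add_cherry m k T = (\<lambda>(i, j). (shift_from (k + 2) i, shift_from (Suc m - k) j)) ` T \<union>
     {(k + 2, m - k), (k + 1, Suc m - k)}"

definition remove_cherry :: "nat \<Rightarrow> nat \<Rightarrow> (nat \<times> nat) set \<Rightarrow> (nat \<times> nat) set" where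
  "remove_cherry m k T = (\<lambda>(i, j). (unshift_from (k + 2) i, unshift_from (Suc m - k) j)) `
     {(i, j) \<in> T. i \<noteq> k + 2 \<and> j \<noteq> Suc m - k}"

lemma mem_add_cherry:
  "(x, y) \<in> add_cherry m k T \<longleftrightarrow> (x, y) = (k + 2, m - k) \<or> (x, y) = (k + 1, Suc m - k) \<or>
     (\<exists>i j. (i, j) \<in> T \<and> x = shift_from (k + 2) i \<and> y = shift_from (Suc m - k) j)"
  unfolding add_cherry_def by auto

lemma mem_remove_cherry:
  "(x, y) \<in> remove_cherry m k T \<longleftrightarrow> (\<exists>i j. (i, j) \<in> T \<and> i \<noteq> k + 2 \<and> j \<noteq> Suc m - k \<and>
     x = unshift_from (k + 2) i \<and> y = unshift_from (Suc m - k) j)"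
  unfolding remove_cherry_def by force

lemma remove_add_cherry: "remove_cherry m k (add_cherry m k T) = T"
proof (intro set_eqI iffI)
  fix p
  assume "p \<in> remove_cherry m k (add_cherry m k T)"
  then obtain x y where "p = (x, y)" "\<exists>i j. (i, j) \<in> add_cherry m k T \<and> i \<noteq> k + 2 \<and>
      j \<noteq> Suc m - k \<and> x = unshift_from (k + 2) i \<and> y = unshift_from (Suc m - k) j"
    using mem_remove_cherry by (metis surj_pair)
  then show "p \<in> T"
    unfolding mem_add_cherry by auto
next
  fix p
  assume "p \<in> T"
  obtain x y where p: "p = (x, y)"
    by force
  have "(shift_from (k + 2) x, shift_from (Suc m - k) y) \<in> add_cherry m k T"
    using \<open>p \<in> T\<close> p mem_add_cherry by blast
  then show "p \<in> remove_cherry m k (add_cherry m k T)"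
    unfolding p mem_remove_cherry
    by (intro exI[of _ "shift_from (k + 2) x"] exI[of _ "shift_from (Suc m - k) y"]) auto
qed

lemma mem_add_cherryI:
  "(i, j) \<in> T \<Longrightarrow> x = shift_from (k + 2) i \<Longrightarrow> y = shift_from (Suc m - k) j \<Longrightarrow>
    (x, y) \<in> add_cherry m k T"
  unfolding add_cherry_def by auto

lemma add_cherry_above_iff:
  assumes shape: "ud_shape m T" and k: "k < m" and ij: "(i, j) \<in> T"
  shows "(\<exists>x<shift_from (k + 2) i. (x, shift_from (Suc m - k) j) \<in> add_cherry m k T) \<longleftrightarrow>
    (\<exists>x<i. (x, j) \<in> T)"
proof
  assume "\<exists>x<shift_from (k + 2) i. (x, shift_from (Suc m - k) j) \<in> add_cherry m k T"
  then obtain x where x: "x < shift_from (k + 2) i"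
    "(x, shift_from (Suc m - k) j) \<in> add_cherry m k T"
    by blast
  have st: "i + j \<le> Suc m"
    using ud_shape_cell[OF shape ij] by auto
  from x(2)[unfolded mem_add_cherry] consider
      "(x, shift_from (Suc m - k) j) = (k + 2, m - k)"
    | "(x, shift_from (Suc m - k) j) = (k + 1, Suc m - k)"
    | "\<exists>i' j'. (i', j') \<in> T \<and> x = shift_from (k + 2) i' \<and>
        shift_from (Suc m - k) j = shift_from (Suc m - k) j'"
    by blast
  then show "\<exists>x<i. (x, j)\<in> T"
  proof cases
    case 1
    then have "j = m - k" "k + 2 \<le> i"
      using x(1) k by (auto simp: shift_from_def split: if_splits)
    then show ?thesis
      using st k by auto
  next
    case 2
    then show ?thesis
      by auto
  next
    case 3
    then obtain i' where "(i', j) \<in> T" "x = shift_from (k + 2) i'"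
      by auto
    then show ?thesis
      using x(1) by auto
  qed
next
  assume "\<exists>x<i. (x, j)\<in> T"
  then obtain x where "x < i" "(x, j) \<in> T"
    by blast
  then show "\<exists>x<shift_from (k + 2) i. (x, shift_from (Suc m - k) j) \<in> add_cherry m k T"
    by (intro exI[of _ "shift_from (k + 2) x"]) (auto simp: mem_add_cherry)
qed

lemma add_cherry_left_iff:
  assumes shape: "ud_shape m T" and k: "k < m" and ij: "(i, j) \<in> T"
  shows "(\<exists>y<shift_from (Suc m - k) j. (shift_from (k + 2) i, y) \<in> add_cherry m k T) \<longleftrightarrow>
    (\<exists>y<j. (i, y) \<in> T)"
proof
  assume "\<exists>y<shift_from (Suc m - k) j. (shift_from (k + 2) i, y) \<in> add_cherry m k T"
  then obtain y where y: "y < shift_from (Suc m - k) j"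
    "(shift_from (k + 2) i, y) \<in> add_cherry m k T"
    by blast
  have st: "i + j \<le> Suc m"
    using ud_shape_cell[OF shape ij] by auto
  from y(2)[unfolded mem_add_cherry] consider
      "(shift_from (k + 2) i, y) = (k + 2, m - k)"
    | "(shift_from (k + 2) i, y) = (k + 1, Suc m - k)"
    | "\<exists>i' j'. (i', j') \<in> T \<and> shift_from (k + 2) i = shift_from (k + 2) i' \<and>
        y = shift_from (Suc m - k) j'"
    by blast
  then show "\<exists>y<j. (i, y)\<in> T"
  proof cases
    case 1
    then show ?thesis
      by auto
  next
    case 2
    then have "i = k + 1" "Suc m - k \<le> j"
      using y(1) k by (auto simp: shift_from_def split: if_splits)
    then show ?thesis
      using st k by auto
  next
    case 3
    then obtain j' where "(i, j') \<in> T" "y = shift_from (Suc m - k) j'"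
      by auto
    then show ?thesis
      using y(1) by auto
  qed
next
  assume "\<exists>y<j. (i, y)\<in> T"
  then obtain y where "y < j" "(i, y) \<in> T"
    by blast
  then show "\<exists>y<shift_from (Suc m - k) j. (shift_from (k + 2) i, y) \<in> add_cherry m k T"
    by (intro exI[of _ "shift_from (Suc m - k) y"]) (auto simp: mem_add_cherry)
qed

lemma add_cherry_leaf_below:
  assumes shape: "ud_shape m T" and k: "k < m"
  shows "(\<exists>i'<k + 2. (i', m - k) \<in> add_cherry m k T) \<and>
    \<not> (\<exists>j'<m - k. (k + 2, j') \<in> add_cherry m k T)"
proof
  have "(k + 1, m - k) \<in> T"
    using ud_shape_antidiagonal[OF shape, of "k + 1"] k by auto
  then have "(k + 1, m - k) \<in> add_cherry m k T"
    by (rule mem_add_cherryI) (use k in \<open>auto simp: shift_from_def\<close>)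
  then show "\<exists>i'<k + 2. (i', m - k) \<in> add_cherry m k T"
    by auto
  show "\<not> (\<exists>j'<m - k. (k + 2, j') \<in> add_cherry m k T)"
    unfolding mem_add_cherry by (auto simp: shift_from_def split: if_splits)
qed

lemma add_cherry_leaf_right:
  assumes shape: "ud_shape m T" and k: "k < m"
  shows "(\<exists>j'<Suc m - k. (k + 1, j') \<in> add_cherry m k T) \<and>
    \<not> (\<exists>i'<k + 1. (i', Suc m - k) \<in> add_cherry m k T)"
proof
  have "(k + 1, m - k) \<in> T"
    using ud_shape_antidiagonal[OF shape, of "k + 1"] k by auto
  then have "(k + 1, m - k) \<in> add_cherry m k T"
    by (rule mem_add_cherryI) (use k in \<open>auto simp: shift_from_def\<close>)
  then show "\<exists>j'<Suc m - k. (k + 1, j') \<in> add_cherry m k T"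
    using k by (intro exI[of _ "m - k"]) auto
  show "\<not> (\<exists>i'<k + 1. (i', Suc m - k) \<in> add_cherry m k T)"
    using k unfolding mem_add_cherry by (auto simp: shift_from_def split: if_splits)
qed

lemma add_cherry_antidiagonal:
  assumes shape: "ud_shape m T" and k: "k < m" and i: "1 \<le> i" "i \<le> Suc m"
  shows "(i, Suc (Suc m) - i) \<in> add_cherry m k T"
proof -
  consider "i \<le> k" | "i = k + 1" | "i = k + 2" | "k + 3 \<le> i"
    by linarith
  then show ?thesis
  proof cases
    case 1
    have "(i, Suc m - i) \<in> T"
      using ud_shape_antidiagonal[OF shape] i 1 k by auto
    then show ?thesis
      unfolding mem_add_cherry using 1 k
      by (intro disjI2 exI[of _ i] exI[of _ "Suc m - i"]) (auto simp: shift_from_def)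
  next
    case 4
    have "(i - 1, Suc m - (i - 1)) \<in> T"
      using ud_shape_antidiagonal[OF shape, of "i - 1"] i 4 k by auto
    then show ?thesis
      unfolding mem_add_cherry using 4 k i
      by (intro disjI2 exI[of _ "i - 1"] exI[of _ "Suc m - (i - 1)"]) (auto simp: shift_from_def)
  qed (use k in \<open>auto simp: mem_add_cherry\<close>)
qed

lemma ud_shape_add_cherry:
  assumes shape: "ud_shape m T" and k: "k < m"
  shows "ud_shape (Suc m) (add_cherry m k T)"
proof (rule ud_shapeI)
  fix x y
  assume xy: "(x, y) \<in> add_cherry m k T"
  then consider "(x, y) = (k + 2, m - k)" | "(x, y) = (k + 1, Suc m - k)"
    | i j where "(i, j) \<in> T" "x = shift_from (k + 2) i" "y = shift_from (Suc m - k) j"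
    unfolding mem_add_cherry by blast
  note cases = this
  then show "1 \<le> x \<and> 1 \<le> y \<and> x + y \<le> Suc (Suc m)"
  proof cases
    case 3
    then show ?thesis
      using ud_shape_cell[OF shape 3(1)] k by (auto simp: shift_from_def)
  qed (use k in auto)
  assume "(x, y) \<noteq> (1, 1)"
  from cases show "(\<exists>i'<x. (i', y) \<in> add_cherry m k T) \<noteq> (\<exists>j'<y. (x, j') \<in> add_cherry m k T)"
  proof cases
    case 1
    then show ?thesis
      using add_cherry_leaf_below[OF shape k] by auto
  next
    case 2
    then show ?thesis
      using add_cherry_leaf_right[OF shape k] by auto
  next
    case (3 i j)
    then have "(i, j) \<noteq> (1, 1)"
      using \<open>(x, y) \<noteq> (1, 1)\<close> k by (auto simp: shift_from_def split: if_splits)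
    then show ?thesis
      using ud_shape_above_xor_left[OF shape 3(1)] add_cherry_above_iff[OF shape k 3(1)]
        add_cherry_left_iff[OF shape k 3(1)] 3 by simp
  qed
next
  show "(1, 1) \<in> add_cherry m k T"
    using ud_shape_root[OF shape] k unfolding mem_add_cherry
    by (intro disjI2 exI[of _ 1] exI[of _ 1]) (auto simp: shift_from_def)
next
  show "(i, Suc (Suc m) - i) \<in> add_cherry m k T" if "1 \<le> i" "i \<le> Suc m" for i
    using add_cherry_antidiagonal[OF shape k that] .
qed

lemma add_cherry_first_antidiagonal:
  assumes shape: "ud_shape m T" and k: "k < m" and none: "\<forall>i\<in>{1..k - 1}. (i, m - i) \<notin> T"
  shows "(\<forall>i\<in>{1..k}. (i, Suc m - i) \<notin> add_cherry m k T) \<and> (k + 1, Suc m - k - 1) \<in> add_cherry m k T"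
proof
  show "\<forall>i\<in>{1..k}. (i, Suc m - i) \<notin> add_cherry m k T"
  proof
    fix i
    assume i: "i \<in> {1..k}"
    show "(i, Suc m - i) \<notin> add_cherry m k T"
    proof
      assume "(i, Suc m - i) \<in> add_cherry m k T"
      then obtain i' j' where h: "(i', j') \<in> T" "i = shift_from (k + 2) i'"
        "Suc m - i = shift_from (Suc m - k) j'"
        using i unfolding mem_add_cherry by auto
      have "i' = i"
        using h(2) i by (auto simp: shift_from_def split: if_splits)
      moreover have "i < k" "j' = m - i"
        using h(3) i k by (auto simp: shift_from_def split: if_splits)
      ultimately show False
        using none h(1) i by auto
    qed
  qed
  have lk: "(k + 1, m - k) \<in> T"
    using ud_shape_antidiagonal[OF shape, of "k + 1"] k by auto
  show "(k + 1, Suc m - k - 1) \<in> add_cherry m k T"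
    by (rule mem_add_cherryI[OF lk]) (use k in \<open>auto simp: shift_from_def\<close>)
qed

lemma cherry_row:
  assumes shape: "ud_shape (Suc m) T" and k: "k < m" and P: "(k + 1, m - k) \<in> T"
    and y: "(k + 2, y) \<in> T"
  shows "y = m - k"
proof (rule ccontr)
  assume ne: "y \<noteq> m - k"
  have "y \<le> m - k"
    using ud_shape_cell[OF shape y] by auto
  then have "y < m - k"
    using ne by auto
  have leaf: "(k + 2, m - k) \<in> T"
    using ud_shape_antidiagonal[OF shape, of "k + 2"] k by auto
  have "(k + 2, m - k) \<noteq> (1, 1)"
    by auto
  then have "(\<exists>i'<k + 2. (i', m - k) \<in> T) \<noteq> (\<exists>j'<m - k. (k + 2, j') \<in> T)"
    using ud_shape_above_xor_left[OF shape leaf] by blast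
  moreover have "\<exists>i'<k + 2. (i', m - k) \<in> T"
    using P by auto
  moreover have "\<exists>j'<m - k. (k + 2, j') \<in> T"
    using y \<open>y < m - k\<close> by auto
  ultimately show False
    by blast
qed

lemma cherry_column:
  assumes shape: "ud_shape (Suc m) T" and k: "k < m" and P: "(k + 1, m - k) \<in> T"
    and x: "(x, Suc m - k) \<in> T"
  shows "x = k + 1"
proof (rule ccontr)
  assume ne: "x \<noteq> k + 1"
  have "x \<le> k + 1"
    using ud_shape_cell[OF shape x] k by auto
  then have "x < k + 1"
    using ne by auto
  have leaf: "(k + 1, Suc m - k) \<in> T"
    using ud_shape_antidiagonal[OF shape, of "k + 1"] k by auto
  have "(k + 1, Suc m - k) \<noteq> (1, 1)"
    using k by auto
  then have "(\<exists>i'<k + 1. (i', Suc m - k) \<in> T) \<noteq> (\<exists>j'<Suc m - k. (k + 1, j') \<in> T)"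
    using ud_shape_above_xor_left[OF shape leaf] by blast
  moreover have "\<exists>j'<Suc m - k. (k + 1, j') \<in> T"
    using P k by (intro exI[of _ "m - k"]) auto
  moreover have "\<exists>i'<k + 1. (i', Suc m - k) \<in> T"
    using x \<open>x < k + 1\<close> by auto
  ultimately show False
    by blast
qed

lemma mem_remove_cherryI:
  "(i, j) \<in> T \<Longrightarrow> i \<noteq> k + 2 \<Longrightarrow> j \<noteq> Suc m - k \<Longrightarrow>
    x = unshift_from (k + 2) i \<Longrightarrow> y = unshift_from (Suc m - k) j \<Longrightarrow> (x, y) \<in> remove_cherry m k T"
  unfolding mem_remove_cherry by blast

lemma remove_cherry_above_iff:
  assumes shape: "ud_shape (Suc m) T" and k: "k < m" and P: "(k + 1, m - k) \<in> T"
    and ij: "(i, j) \<in> T" "i \<noteq> k + 2" "j \<noteq> Suc m - k"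
  shows "(\<exists>x<unshift_from (k + 2) i. (x, unshift_from (Suc m - k) j) \<in> remove_cherry m k T) \<longleftrightarrow>
    (\<exists>x<i. (x, j) \<in> T)"
proof
  assume "\<exists>x<unshift_from (k + 2) i. (x, unshift_from (Suc m - k) j) \<in> remove_cherry m k T"
  then obtain x where x: "x < unshift_from (k + 2) i"
    "(x, unshift_from (Suc m - k) j) \<in> remove_cherry m k T"
    by blast
  then obtain i' j' where h: "(i', j') \<in> T" "i' \<noteq> k + 2" "j' \<noteq> Suc m - k"
    "x = unshift_from (k + 2) i'" "unshift_from (Suc m - k) j = unshift_from (Suc m - k) j'"
    unfolding mem_remove_cherry by metis
  have "j' = j"
    using h(3, 5) ij(3) unshift_from_eq_iff by metis
  moreover have "i' < i"
    using h(2, 4) x(1) ij(2) unshift_from_less_iff by metis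
  ultimately show "\<exists>x<i. (x, j)\<in> T"
    using h(1) by auto
next
  assume "\<exists>x<i. (x, j)\<in> T"
  then obtain x where x: "x < i" "(x, j) \<in> T"
    by blast
  have "x \<noteq> k + 2"
  proof
    assume "x = k + 2"
    then have "j = m - k"
      using cherry_row[OF shape k P] x by auto
    then show False
      using ud_shape_cell[OF shape ij(1)] x \<open>x = k + 2\<close> k by auto
  qed
  then have "(unshift_from (k + 2) x, unshift_from (Suc m - k) j) \<in> remove_cherry m k T"
    using mem_remove_cherryI[OF x(2)] ij by blast
  moreover have "unshift_from (k + 2) x < unshift_from (k + 2) i"
    using unshift_from_less_iff \<open>x \<noteq> k + 2\<close> ij(2) x(1) by metis
  ultimately show "\<exists>x<unshift_from (k + 2) i. (x, unshift_from (Suc m - k) j) \<in> remove_cherry m k T"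
    by blast
qed

lemma remove_cherry_left_iff:
  assumes shape: "ud_shape (Suc m) T" and k: "k < m" and P: "(k + 1, m - k) \<in> T"
    and ij: "(i, j) \<in> T" "i \<noteq> k + 2" "j \<noteq> Suc m - k"
  shows "(\<exists>y<unshift_from (Suc m - k) j. (unshift_from (k + 2) i, y) \<in> remove_cherry m k T) \<longleftrightarrow>
    (\<exists>y<j. (i, y) \<in> T)"
proof
  assume "\<exists>y<unshift_from (Suc m - k) j. (unshift_from (k + 2) i, y) \<in> remove_cherry m k T"
  then obtain y where y: "y < unshift_from (Suc m - k) j"
    "(unshift_from (k + 2) i, y) \<in> remove_cherry m k T"
    by blast
  then obtain i' j' where h: "(i', j') \<in> T" "i' \<noteq> k + 2" "j' \<noteq> Suc m - k"
    "unshift_from (k + 2) i = unshift_from (k + 2) i'" "y = unshift_from (Suc m - k) j'"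
    unfolding mem_remove_cherry by metis
  have "i' = i"
    using h(2, 4) ij(2) unshift_from_eq_iff by metis
  moreover have "j' < j"
    using h(3, 5) y(1) ij(3) unshift_from_less_iff by metis
  ultimately show "\<exists>y<j. (i, y)\<in> T"
    using h(1) by auto
next
  assume "\<exists>y<j. (i, y)\<in> T"
  then obtain y where y: "y < j" "(i, y) \<in> T"
    by blast
  have "y \<noteq> Suc m - k"
  proof
    assume "y = Suc m - k"
    then have "i = k + 1"
      using cherry_column[OF shape k P] y by auto
    then show False
      using ud_shape_cell[OF shape ij(1)] y \<open>y = Suc m - k\<close> k by auto
  qed
  then have "(unshift_from (k + 2) i, unshift_from (Suc m - k) y) \<in> remove_cherry m k T"
    using mem_remove_cherryI[OF y(2)] ij by blast
  moreover have "unshift_from (Suc m - k) y < unshift_from (Suc m - k) j"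
    using unshift_from_less_iff \<open>y \<noteq> Suc m - k\<close> ij(3) y(1) by metis
  ultimately show "\<exists>y<unshift_from (Suc m - k) j. (unshift_from (k + 2) i, y) \<in> remove_cherry m k T"
    by blast
qed

lemma remove_cherry_antidiagonal:
  assumes shape: "ud_shape (Suc m) T" and k: "k < m" and P: "(k + 1, m - k) \<in> T"
    and i: "1 \<le> i" "i \<le> m"
  shows "(i, Suc m - i) \<in> remove_cherry m k T"
proof -
  consider "i \<le> k" | "i = k + 1" | "k + 2 \<le> i"
    by linarith
  then show ?thesis
  proof cases
    case 1
    have "(i, Suc (Suc m) - i) \<in> T"
      using ud_shape_antidiagonal[OF shape] i 1 k by auto
    then show ?thesis
      using 1 k i
      by (intro mem_remove_cherryI[of i "Suc (Suc m) - i"]) (auto simp: unshift_from_def)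
  next
    case 2
    then show ?thesis
      using P k by (intro mem_remove_cherryI[of "k + 1" "m - k"]) (auto simp: unshift_from_def)
  next
    case 3
    have "(i + 1, Suc (Suc m) - (i + 1)) \<in> T"
      using ud_shape_antidiagonal[OF shape, of "i + 1"] i 3 k by auto
    then show ?thesis
      using 3 k i
      by (intro mem_remove_cherryI[of "i + 1" "Suc (Suc m) - (i + 1)"])
        (auto simp: unshift_from_def)
  qed
qed

lemma ud_shape_remove_cherry:
  assumes shape: "ud_shape (Suc m) T" and k: "k < m" and P: "(k + 1, m - k) \<in> T"
  shows "ud_shape m (remove_cherry m k T)"
proof (rule ud_shapeI)
  fix x y
  assume "(x, y) \<in> remove_cherry m k T"
  then obtain i j where h: "(i, j) \<in> T" "i \<noteq> k + 2" "j \<noteq> Suc m - k"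
    "x = unshift_from (k + 2) i" "y = unshift_from (Suc m - k) j"
    unfolding mem_remove_cherry by metis
  have b: "1 \<le> i" "1 \<le> j" "i + j \<le> Suc (Suc m)"
    using ud_shape_cell[OF shape h(1)] by auto
  show "1 \<le> x \<and> 1 \<le> y \<and> x + y \<le> Suc m"
    using b h k by (auto simp: unshift_from_def)
  assume ne: "(x, y) \<noteq> (1, 1)"
  have ne': "(i, j) \<noteq> (1, 1)"
    using ne h k by (auto simp: unshift_from_def)
  show "(\<exists>i'<x. (i', y) \<in> remove_cherry m k T) \<noteq> (\<exists>j'<y. (x, j') \<in> remove_cherry m k T)"
    using ud_shape_above_xor_left[OF shape h(1) ne'] remove_cherry_above_iff[OF shape k P h(1-3)]
      remove_cherry_left_iff[OF shape k P h(1-3)] h(4, 5)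
    by simp
next
  show "(1, 1) \<in> remove_cherry m k T"
    using ud_shape_root[OF shape] k
    by (intro mem_remove_cherryI[of 1 1]) (auto simp: unshift_from_def)
next
  show "(i, Suc m - i) \<in> remove_cherry m k T" if "1 \<le> i" "i \<le> m" for i
    using remove_cherry_antidiagonal[OF shape k P that] .
qed

lemma remove_cherry_avoids:
  assumes shape: "ud_shape (Suc m) T" and k: "k < m" and none: "\<forall>i\<in>{1..k}. (i, Suc m - i) \<notin> T"
  shows "\<forall>i\<in>{1..k - 1}. (i, m - i) \<notin> remove_cherry m k T"
proof
  fix i
  assume i: "i \<in> {1..k - 1}"
  show "(i, m - i) \<notin> remove_cherry m k T"
  proof
    assume "(i, m - i) \<in> remove_cherry m k T"
    then obtain i' j' where h: "(i', j') \<in> T" "i' \<noteq> k + 2" "j' \<noteq> Suc m - k"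
      "i = unshift_from (k + 2) i'" "m - i = unshift_from (Suc m - k) j'"
      unfolding mem_remove_cherry by metis
    have "i' = i"
      using h(2, 4) i by (auto simp: unshift_from_def split: if_splits)
    moreover have "j' = Suc m - i"
      using h(3, 5) i k by (auto simp: unshift_from_def split: if_splits)
    ultimately show False
      using h(1) none i by auto
  qed
qed

lemma add_remove_cherry_subset:
  assumes shape: "ud_shape (Suc m) T" and k: "k < m"
  shows "add_cherry m k (remove_cherry m k T) \<subseteq> T"
proof
  fix p
  assume "p \<in> add_cherry m k (remove_cherry m k T)"
  moreover obtain x y where p: "p = (x, y)"
    by force
  ultimately consider "(x, y) = (k + 2, m - k)" | "(x, y) = (k + 1, Suc m - k)"
    | "\<exists>i j. (i, j) \<in> remove_cherry m k T \<and> x = shift_from (k + 2) i \<and> y = shift_from (Suc m - k) j"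
    using mem_add_cherry[of x y m k "remove_cherry m k T"] by blast
  then show "p \<in> T"
  proof cases
    case 1
    then show ?thesis
      using ud_shape_antidiagonal[OF shape, of "k + 2"] k p by auto
  next
    case 2
    then show ?thesis
      using ud_shape_antidiagonal[OF shape, of "k + 1"] k p by auto
  next
    case 3
    then obtain i j where "(i, j) \<in> remove_cherry m k T"
      "x = shift_from (k + 2) i" "y = shift_from (Suc m - k) j"
      by blast
    then obtain i' j' where h: "(i', j') \<in> T" "i' \<noteq> k + 2" "j' \<noteq> Suc m - k"
      "i = unshift_from (k + 2) i'" "j = unshift_from (Suc m - k) j'"
      "x = shift_from (k + 2) i" "y = shift_from (Suc m - k) j"
      unfolding mem_remove_cherry by metis
    then show ?thesis
      using p by simp
  qed
qed

lemma subset_add_remove_cherry: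
  assumes shape: "ud_shape (Suc m) T" and k: "k < m" and P: "(k + 1, m - k) \<in> T"
  shows "T \<subseteq> add_cherry m k (remove_cherry m k T)"
proof
  fix p
  assume pT: "p \<in> T"
  obtain x y where p: "p = (x, y)"
    by force
  show "p \<in> add_cherry m k (remove_cherry m k T)"
  proof (cases "x = k + 2")
    case True
    then have "y = m - k"
      using cherry_row[OF shape k P] pT p by auto
    then show ?thesis
      using True p unfolding add_cherry_def by auto
  next
    case False
    show ?thesis
    proof (cases "y = Suc m - k")
      case True
      then have "x = k + 1"
        using cherry_column[OF shape k P] pT p by auto
      then show ?thesis
        using True p unfolding add_cherry_def by auto
    next
      case False2: False
      have "(unshift_from (k + 2) x, unshift_from (Suc m - k) y) \<in> remove_cherry m k T"
        using mem_remove_cherryI pT p False False2 by blast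
      then show ?thesis
        using p False False2 by (auto intro: mem_add_cherryI)
    qed
  qed
qed

lemma add_remove_cherry:
  assumes shape: "ud_shape (Suc m) T" and k: "k < m" and P: "(k + 1, m - k) \<in> T"
  shows "add_cherry m k (remove_cherry m k T) = T"
  using add_remove_cherry_subset[OF shape k] subset_add_remove_cherry[OF assms] by (rule equalityI)

definition ud_avoiding :: "nat \<Rightarrow> nat \<Rightarrow> (nat \<times> nat) set set" where
  "ud_avoiding n j = {T. ud_shape n T \<and> (\<forall>i \<in> {1..j}. (i, n - i) \<notin> T)}"

lemma card_ud_avoiding_with_cherry:
  assumes k: "k < m"
  shows "card {T \<in> ud_avoiding (Suc m) k. (k + 1, m - k) \<in> T} = card (ud_avoiding m (k - 1))"
proof (rule bij_betw_same_card[of "remove_cherry m k"],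
       rule bij_betw_byWitness[where f' = "add_cherry m k"])
  show "\<forall>T \<in> {T \<in> ud_avoiding (Suc m) k. (k + 1, m - k) \<in> T}.
      add_cherry m k (remove_cherry m k T) = T"
    using add_remove_cherry k by (auto simp: ud_avoiding_def)
  show "\<forall>T \<in> ud_avoiding m (k - 1). remove_cherry m k (add_cherry m k T) = T"
    using remove_add_cherry by auto
  show "remove_cherry m k ` {T \<in> ud_avoiding (Suc m) k. (k + 1, m - k) \<in> T} \<subseteq> ud_avoiding m (k - 1)"
    using ud_shape_remove_cherry remove_cherry_avoids k by (auto simp: ud_avoiding_def)
  show "add_cherry m k ` ud_avoiding m (k - 1) \<subseteq> {T \<in> ud_avoiding (Suc m) k. (k + 1, m - k) \<in> T}"
    using ud_shape_add_cherry add_cherry_first_antidiagonal k by (auto simp: ud_avoiding_def)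
qed

section \<open>The number of upper-diagonal CNMs\<close>

text \<open>A forest of size p hanging from the columns S: as for upper-diagonal CNMs, except that
  a vertex in a column of S counts as having a vertex above it.  The set S records the columns
  occupied by rows that have already been peeled off; an upper-diagonal CNM is the case S = {1}.\<close>
definition ud_forest :: "nat \<Rightarrow> nat set \<Rightarrow> (nat \<times> nat) set \<Rightarrow> bool" where
  "ud_forest p S C \<longleftrightarrow> C \<subseteq> {(i, j). 1 \<le> i \<and> 1 \<le> j \<and> i + j \<le> Suc p} \<and>
     (\<forall>i. 1 \<le> i \<and> i \<le> p \<longrightarrow> (i, Suc p - i) \<in> C) \<and>
     (\<forall>i j. (i, j) \<in> C \<longrightarrow> (\<exists>j'<j. (i, j') \<in> C) \<noteq> (j \<in> S \<or> (\<exists>i'<i. (i', j) \<in> C)))"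

lemma ud_forestI:
  assumes "\<And>i j. (i, j) \<in> C \<Longrightarrow> 1 \<le> i \<and> 1 \<le> j \<and> i + j \<le> Suc p"
    and "\<And>i. 1 \<le> i \<Longrightarrow> i \<le> p \<Longrightarrow> (i, Suc p - i) \<in> C"
    and "\<And>i j. (i, j) \<in> C \<Longrightarrow> (\<exists>j'<j. (i, j') \<in> C) \<noteq> (j \<in> S \<or> (\<exists>i'<i. (i', j) \<in> C))"
  shows "ud_forest p S C"
  unfolding ud_forest_def using assms by blast

lemma ud_forest_cell: "ud_forest p S C \<Longrightarrow> (i, j) \<in> C \<Longrightarrow> 1 \<le> i \<and> 1 \<le> j \<and> i + j \<le> Suc p"
  unfolding ud_forest_def by auto

lemma ud_forest_antidiagonal: "ud_forest p S C \<Longrightarrow> 1 \<le> i \<Longrightarrow> i \<le> p \<Longrightarrow> (i, Suc p - i) \<in> C"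
  unfolding ud_forest_def by auto

lemma ud_forest_left_iff:
  "ud_forest p S C \<Longrightarrow> (i, j) \<in> C \<Longrightarrow> (\<exists>j'<j. (i, j') \<in> C) \<noteq> (j \<in> S \<or> (\<exists>i'<i. (i', j) \<in> C))"
  unfolding ud_forest_def by blast

lemma finite_ud_forest: "finite {C. ud_forest p S C}"
proof (rule finite_subset)
  show "{C. ud_forest p S C} \<subseteq> Pow ({1..p} \<times> {1..p})"
    by (fastforce dest: ud_forest_cell)
qed simp

lemma ud_shape_imp_ud_forest:
  assumes T: "ud_shape n T"
  shows "ud_forest n {1} T"
proof (rule ud_forestI)
  show "1 \<le> i \<and> 1 \<le> j \<and> i + j \<le> Suc n" if "(i, j) \<in> T" for i j
    using ud_shape_cell[OF T that] .
  show "(i, Suc n - i) \<in> T" if "1 \<le> i" "i \<le> n" for i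
    using ud_shape_antidiagonal[OF T that] .
  show "(\<exists>j'<j. (i, j') \<in> T) \<noteq> (j \<in> {1} \<or> (\<exists>i'<i. (i', j) \<in> T))" if ij: "(i, j) \<in> T" for i j
  proof (cases "j = 1")
    case True
    then show ?thesis
      using ud_shape_cell[OF T] by fastforce
  next
    case False
    then show ?thesis
      using ud_shape_above_xor_left[OF T ij] by auto
  qed
qed

lemma ud_forest_imp_ud_shape:
  assumes C: "ud_forest n {1} T" and n: "1 \<le> n"
  shows "ud_shape n T"
proof -
  define j0 where "j0 = (LEAST j. (1, j) \<in> T)"
  have "(1, n) \<in> T"
    using ud_forest_antidiagonal[OF C, of 1] n by simp
  then have j0: "(1, j0) \<in> T" "\<not> (\<exists>j'<j0. (1, j') \<in> T)"
    unfolding j0_def by (auto intro: LeastI dest: not_less_Least)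
  moreover have "\<not> (\<exists>i'<1. (i', j0) \<in> T)"
    using ud_forest_cell[OF C] by fastforce
  ultimately have root: "(1, 1) \<in> T"
    using ud_forest_left_iff[OF C j0(1)] by auto
  show ?thesis
  proof (rule ud_shapeI)
    show "1 \<le> i \<and> 1 \<le> j \<and> i + j \<le> Suc n" if "(i, j) \<in> T" for i j
      using ud_forest_cell[OF C that] .
    show "(i, Suc n - i) \<in> T" if "1 \<le> i" "i \<le> n" for i
      using ud_forest_antidiagonal[OF C that] .
    show "(\<exists>i'<i. (i', j) \<in> T) \<noteq> (\<exists>j'<j. (i, j') \<in> T)" if ij: "(i, j) \<in> T" "(i, j) \<noteq> (1, 1)" for i j
    proof (cases "j = 1")
      case True
      then have "1 < i"
        using ij ud_forest_cell[OF C ij(1)] by auto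
      then show ?thesis
        using True root ud_forest_cell[OF C] by fastforce
    next
      case False
      then show ?thesis
        using ud_forest_left_iff[OF C ij(1)] by auto
    qed
  qed (rule root)
qed

lemma ud_shape_iff_ud_forest: "1 \<le> n \<Longrightarrow> ud_shape n T \<longleftrightarrow> ud_forest n {1} T"
  using ud_shape_imp_ud_forest ud_forest_imp_ud_shape by blast

definition admissible_top_row :: "nat \<Rightarrow> nat set \<Rightarrow> nat set \<Rightarrow> bool" where
  "admissible_top_row p S R \<longleftrightarrow>
     R \<subseteq> {1..p} \<and> p \<in> R \<and> Min R \<in> S \<and> (\<forall>j \<in> R. j \<noteq> Min R \<longrightarrow> j \<notin> S)"

definition top_row :: "(nat \<times> nat) set \<Rightarrow> nat set" where
  "top_row C = {j. (1, j) \<in> C}"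

definition lower_rows :: "(nat \<times> nat) set \<Rightarrow> (nat \<times> nat) set" where
  "lower_rows C = (\<lambda>(i, j). (i - 1, j)) ` {q \<in> C. 2 \<le> fst q}"

definition stack_row :: "nat set \<Rightarrow> (nat \<times> nat) set \<Rightarrow> (nat \<times> nat) set" where
  "stack_row R C = Pair 1 ` R \<union> (\<lambda>(i, j). (Suc i, j)) ` C"

lemma mem_lower_rows: "(x, y) \<in> lower_rows C \<longleftrightarrow> (Suc x, y) \<in> C \<and> 1 \<le> x"
  unfolding lower_rows_def by (auto simp: image_iff)

lemma mem_stack_row: "(x, y) \<in> stack_row R C \<longleftrightarrow> x = 1 \<and> y \<in> R \<or> (\<exists>i. x = Suc i \<and> (i, y) \<in> C)"
  unfolding stack_row_def by auto

lemma stack_row_above_iff: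
  assumes "1 \<le> i"
  shows "(\<exists>i'<Suc i. (i', y) \<in> stack_row R C) \<longleftrightarrow> y \<in> R \<or> (\<exists>i'<i. (i', y) \<in> C)"
proof
  assume "\<exists>i'<Suc i. (i', y) \<in> stack_row R C"
  then show "y \<in> R \<or> (\<exists>i'<i. (i', y) \<in> C)"
    by (auto simp: mem_stack_row)
next
  assume "y \<in> R \<or> (\<exists>i'<i. (i', y) \<in> C)"
  then consider "(1, y) \<in> stack_row R C" | i' where "i' < i" "(Suc i', y) \<in> stack_row R C"
    by (auto simp: mem_stack_row)
  then show "\<exists>i'<Suc i. (i', y) \<in> stack_row R C"
    using assms by cases (auto intro: exI[of _ 1] exI[of _ "Suc i'"])
qed

lemma admissible_top_row_left_iff:
  assumes R: "admissible_top_row p S R" and y: "y \<in> R"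
  shows "(\<exists>j<y. j \<in> R) \<longleftrightarrow> y \<notin> S"
proof -
  have "finite R"
    using R unfolding admissible_top_row_def by (meson finite_atLeastAtMost finite_subset)
  then have "Min R \<le> j" if "j \<in> R" for j
    using that by simp
  moreover have "Min R \<in> R"
    using \<open>finite R\<close> y by (intro Min_in) auto
  ultimately show ?thesis
    using R y unfolding admissible_top_row_def by (metis leD le_neq_implies_less)
qed

text \<open>Nothing lies above row 1, so a vertex of row 1 has a left neighbour exactly when its column
  is not in S.\<close>
lemma admissible_top_row_top_row:
  assumes C: "ud_forest p S C" and p: "1 \<le> p"
  shows "admissible_top_row p S (top_row C)"
proof -
  let ?R = "top_row C"
  have left_iff: "(\<exists>j'<j. j' \<in> ?R) \<longleftrightarrow> j \<notin> S" if "j \<in> ?R" for j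
    using that ud_forest_left_iff[OF C, of 1 j] ud_forest_cell[OF C, of 0 j]
    by (auto simp: top_row_def)
  have sub: "?R \<subseteq> {1..p}"
    using ud_forest_cell[OF C] by (fastforce simp: top_row_def)
  have p_mem: "p \<in> ?R"
    using ud_forest_antidiagonal[OF C, of 1] p by (simp add: top_row_def)
  have "finite ?R"
    using sub by (meson finite_atLeastAtMost finite_subset)
  then have min: "Min ?R \<in> ?R" and min_le: "\<And>j. j \<in> ?R \<Longrightarrow> Min ?R \<le> j"
    using p_mem by (auto intro: Min_in)
  have "Min ?R \<in> S"
    using left_iff[OF min] min_le by (meson leD)
  moreover have "j \<notin> S" if "j \<in> ?R" "j \<noteq> Min ?R" for j
    using left_iff[OF that(1)] min min_le[OF that(1)] that(2) by (metis le_neq_implies_less)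
  ultimately show ?thesis
    unfolding admissible_top_row_def using sub p_mem by blast
qed

lemma ud_forest_lower_rows:
  assumes C: "ud_forest p S C" and p: "2 \<le> p"
  shows "ud_forest (p - 1) (S \<union> top_row C) (lower_rows C)"
proof (rule ud_forestI)
  fix x y
  assume xy: "(x, y) \<in> lower_rows C"
  then have c: "(Suc x, y) \<in> C" "1 \<le> x"
    by (auto simp: mem_lower_rows)
  show "1 \<le> x \<and> 1 \<le> y \<and> x + y \<le> Suc (p - 1)"
    using ud_forest_cell[OF C c(1)] c(2) p by auto
  have left: "(\<exists>j'<y. (x, j') \<in> lower_rows C) \<longleftrightarrow> (\<exists>j'<y. (Suc x, j') \<in> C)"
    using c(2) by (auto simp: mem_lower_rows)
  have above: "(\<exists>i'<Suc x. (i', y) \<in> C) \<longleftrightarrow> y \<in> top_row C \<or> (\<exists>i'<x. (i', y) \<in> lower_rows C)"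
  proof
    assume "\<exists>i'<Suc x. (i', y) \<in> C"
    then obtain i' where i': "i' < Suc x" "(i', y) \<in> C"
      by blast
    then have "i' = 1 \<or> (i' - 1 < x \<and> (i' - 1, y) \<in> lower_rows C)"
      using ud_forest_cell[OF C i'(2)] by (auto simp: mem_lower_rows)
    then show "y \<in> top_row C \<or> (\<exists>i'<x. (i', y) \<in> lower_rows C)"
      using i' by (auto simp: top_row_def)
  next
    assume "y \<in> top_row C \<or> (\<exists>i'<x. (i', y) \<in> lower_rows C)"
    then consider "(1, y) \<in> C" | i' where "i' < x" "(Suc i', y) \<in> C"
      by (auto simp: mem_lower_rows top_row_def)
    then show "\<exists>i'<Suc x. (i', y) \<in> C"
    proof cases
      case 1
      moreover have "1 < Suc x"
        using c(2) by simp
      ultimately show ?thesis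
        by blast
    qed auto
  qed
  show "(\<exists>j'<y. (x, j') \<in> lower_rows C) \<noteq> (y \<in> S \<union> top_row C \<or> (\<exists>i'<x. (i', y) \<in> lower_rows C))"
    using left above ud_forest_left_iff[OF C c(1)] by auto
next
  fix i
  assume "1 \<le> i" "i \<le> p - 1"
  then show "(i, Suc (p - 1) - i) \<in> lower_rows C"
    using ud_forest_antidiagonal[OF C, of "Suc i"] p by (auto simp: mem_lower_rows)
qed

lemma ud_forest_stack_row:
  assumes R: "admissible_top_row p S R" and C: "ud_forest (p - 1) (S \<union> R) C" and p: "2 \<le> p"
  shows "ud_forest p S (stack_row R C)"
proof (rule ud_forestI)
  have R_sub: "R \<subseteq> {1..p}"
    using R unfolding admissible_top_row_def by blast
  show "1 \<le> x \<and> 1 \<le> y \<and> x + y \<le> Suc p" if "(x, y) \<in> stack_row R C" for x y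
    using that R_sub ud_forest_cell[OF C] p by (fastforce simp: mem_stack_row)
  show "(i, Suc p - i) \<in> stack_row R C" if "1 \<le> i" "i \<le> p" for i
  proof (cases "i = 1")
    case True
    then show ?thesis
      using R unfolding admissible_top_row_def by (simp add: mem_stack_row)
  next
    case False
    then have "(i - 1, Suc (p - 1) - (i - 1)) \<in> C"
      using ud_forest_antidiagonal[OF C, of "i - 1"] that by auto
    moreover have "Suc (p - 1) - (i - 1) = Suc p - i" "i = Suc (i - 1)"
      using that False p by auto
    ultimately show ?thesis
      unfolding mem_stack_row by metis
  qed
  show "(\<exists>j'<y. (x, j') \<in> stack_row R C) \<noteq> (y \<in> S \<or> (\<exists>i'<x. (i', y) \<in> stack_row R C))"
    if xy: "(x, y) \<in> stack_row R C" for x y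
  proof (cases "x = 1")
    case True
    then have "y \<in> R"
      using xy ud_forest_cell[OF C, of 0 y] by (auto simp: mem_stack_row)
    moreover have "(\<exists>j'<y. (x, j') \<in> stack_row R C) \<longleftrightarrow> (\<exists>j'<y. j' \<in> R)"
      using True ud_forest_cell[OF C] by (auto simp: mem_stack_row)
    moreover have "\<not> (\<exists>i'<x. (i', y) \<in> stack_row R C)"
      using True by (auto simp: mem_stack_row)
    ultimately show ?thesis
      using admissible_top_row_left_iff[OF R] by auto
  next
    case False
    then obtain i where i: "x = Suc i" "(i, y) \<in> C" "1 \<le> i"
      using xy ud_forest_cell[OF C] by (fastforce simp: mem_stack_row)
    have "(\<exists>j'<y. (x, j') \<in> stack_row R C) \<longleftrightarrow> (\<exists>j'<y. (i, j') \<in> C)"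
      using i by (auto simp: mem_stack_row)
    moreover have "(\<exists>i'<x. (i', y) \<in> stack_row R C) \<longleftrightarrow> y \<in> R \<or> (\<exists>i'<i. (i', y) \<in> C)"
      using stack_row_above_iff[OF i(3)] i(1) by simp
    ultimately show ?thesis
      using ud_forest_left_iff[OF C i(2)] by auto
  qed
qed

lemma stack_row_top_lower_rows:
  assumes C: "ud_forest p S C"
  shows "stack_row (top_row C) (lower_rows C) = C"
proof (intro set_eqI iffI)
  fix q
  assume "q \<in> stack_row (top_row C) (lower_rows C)"
  then show "q \<in> C"
    by (auto simp: stack_row_def top_row_def mem_lower_rows)
next
  fix q
  assume q: "q \<in> C"
  obtain x y where xy: "q = (x, y)"
    by force
  have "x = 1 \<or> x = Suc (x - 1) \<and> 1 \<le> x - 1"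
    using ud_forest_cell[OF C, of x y] q xy by auto
  then show "q \<in> stack_row (top_row C) (lower_rows C)"
  proof
    assume "x = 1"
    then show ?thesis
      using q xy by (simp add: mem_stack_row top_row_def)
  next
    assume x: "x = Suc (x - 1) \<and> 1 \<le> x - 1"
    then have "(x - 1, y) \<in> lower_rows C"
      using q xy by (simp add: mem_lower_rows)
    then show ?thesis
      unfolding xy mem_stack_row using x by blast
  qed
qed

lemma top_row_stack_row: "ud_forest q S' C \<Longrightarrow> top_row (stack_row R C) = R"
  by (auto simp: top_row_def mem_stack_row dest: ud_forest_cell)

lemma lower_rows_stack_row: "ud_forest q S' C \<Longrightarrow> lower_rows (stack_row R C) = C"
  by (auto simp: mem_lower_rows mem_stack_row dest: ud_forest_cell)

lemma card_ud_forest_by_top_row: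
  assumes p: "2 \<le> p"
  shows "card {C. ud_forest p S C} =
    (\<Sum>R \<in> {R. admissible_top_row p S R}. card {C. ud_forest (p - 1) (S \<union> R) C})"
proof -
  let ?Pairs = "SIGMA R:{R. admissible_top_row p S R}. {C. ud_forest (p - 1) (S \<union> R) C}"
  have "bij_betw (\<lambda>C. (top_row C, lower_rows C)) {C. ud_forest p S C} ?Pairs"
  proof (rule bij_betw_byWitness[where f' = "\<lambda>(R, C). stack_row R C"])
    show "\<forall>C \<in> {C. ud_forest p S C}. (\<lambda>(R, C). stack_row R C) (top_row C, lower_rows C) = C"
      using stack_row_top_lower_rows by auto
    show "\<forall>RC \<in> ?Pairs. (\<lambda>C. (top_row C, lower_rows C)) ((\<lambda>(R, C). stack_row R C) RC) = RC"
      using top_row_stack_row lower_rows_stack_row by fastforce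
    show "(\<lambda>C. (top_row C, lower_rows C)) ` {C. ud_forest p S C} \<subseteq> ?Pairs"
      using admissible_top_row_top_row ud_forest_lower_rows p by auto
    show "(\<lambda>(R, C). stack_row R C) ` ?Pairs \<subseteq> {C. ud_forest p S C}"
      using ud_forest_stack_row p by auto
  qed
  then have "card {C. ud_forest p S C} = card ?Pairs"
    by (rule bij_betw_same_card)
  also have "\<dots> = (\<Sum>R \<in> {R. admissible_top_row p S R}. card {C. ud_forest (p - 1) (S \<union> R) C})"
    by (rule card_SigmaI) (auto simp: admissible_top_row_def finite_ud_forest intro: finite_subset)
  finally show ?thesis .
qed

lemma sum_prod_ratio_telescope:
  fixes q :: nat and S :: "nat set"
  assumes q: "2 \<le> q" and S: "1 \<in> S"
  shows "(\<Sum>m\<in>{m. m \<in> S \<and> 1 \<le> m \<and> m < q}. \<Prod>a\<in>{m<..<q} - S. real a / (real a - 1)) = real q - 1"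
  using q
proof (induction q rule: nat_induct_at_least)
  case base
  have "{m. m \<in> S \<and> 1 \<le> m \<and> m < 2} = {1::nat}"
    using S by auto
  moreover have "{1::nat<..<2} = {}"
    by auto
  ultimately show ?case by simp
next
  case (Suc q)
  let ?M = "{m. m \<in> S \<and> 1 \<le> m \<and> m < q}"
  have finM: "finite ?M"
    by (rule finite_subset[of _ "{..<q}"]) auto
  show ?case
  proof (cases "q \<in> S")
    case True
    have M: "{m. m \<in> S \<and> 1 \<le> m \<and> m < Suc q} = insert q ?M"
      using True Suc.hyps by auto
    have e: "\<And>m. m \<in> ?M \<Longrightarrow> {m<..<Suc q} - S = {m<..<q} - S"
      using True by (auto simp: less_Suc_eq)
    have "(\<Sum>m\<in>{m. m \<in> S \<and> 1 \<le> m \<and> m < Suc q}. \<Prod>a\<in>{m<..<Suc q} - S. real a / (real a - 1))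
       = (\<Prod>a\<in>{q<..<Suc q} - S. real a / (real a - 1)) +
         (\<Sum>m\<in>?M. \<Prod>a\<in>{m<..<Suc q} - S. real a / (real a - 1))"
      unfolding M by (rule sum.insert[OF finM]) auto
    also have "(\<Sum>m\<in>?M. \<Prod>a\<in>{m<..<Suc q} - S. real a / (real a - 1))
        = (\<Sum>m\<in>?M. \<Prod>a\<in>{m<..<q} - S. real a / (real a - 1))"
      by (rule sum.cong) (auto simp: e)
    also have "{q<..<Suc q} = ({}::nat set)"
      by auto
    finally show ?thesis
      using Suc.IH by simp
  next
    case False
    have M: "{m. m \<in> S \<and> 1 \<le> m \<and> m < Suc q} = ?M"
      using False by (auto simp: less_Suc_eq)
    have e: "\<And>m. m \<in> ?M \<Longrightarrow> {m<..<Suc q} - S = insert q ({m<..<q} - S)"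
      using False by auto
    have "(\<Sum>m\<in>{m. m \<in> S \<and> 1 \<le> m \<and> m < Suc q}. \<Prod>a\<in>{m<..<Suc q} - S. real a / (real a - 1))
       = (\<Sum>m\<in>?M. real q / (real q - 1) * (\<Prod>a\<in>{m<..<q} - S. real a / (real a - 1)))"
      unfolding M by (rule sum.cong) (auto simp: e)
    also have "\<dots> = real q / (real q - 1) * (real q - 1)"
      by (simp only: sum_distrib_left[symmetric] Suc.IH)
    also have "\<dots> = real q"
      using Suc.hyps by simp
    finally show ?thesis
      by simp
  qed
qed

lemma sum_Pow_inverse_prod:
  fixes D :: "nat set"
  assumes fin: "finite D" and D: "\<forall>a\<in>D. 2 \<le> a"
  shows "(\<Sum>F\<in>Pow D. 1 / (\<Prod>f\<in>F. real f - 1)) = (\<Prod>a\<in>D. real a / (real a - 1))"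
proof -
  have "(\<Prod>a\<in>D. real a / (real a - 1)) = (\<Prod>a\<in>D. 1 / (real a - 1) + 1)"
  proof (rule prod.cong)
    fix a
    assume "a \<in> D"
    then have "2 \<le> a"
      using D by auto
    then have "real a \<ge> 2"
      by linarith
    then have "real a - 1 \<noteq> 0"
      by linarith
    then show "real a / (real a - 1) = 1 / (real a - 1) + 1"
      by (simp add: field_simps)
  qed simp
  also have "\<dots> = (\<Sum>X\<in>Pow D. (\<Prod>x\<in>X. 1 / (real x - 1)) * (\<Prod>x\<in>D-X. 1))"
    by (rule prod_add[OF fin])
  also have "\<dots> = (\<Sum>F\<in>Pow D. 1 / (\<Prod>f\<in>F. real f - 1))"
    by (rule sum.cong) (simp_all add: prod_dividef)
  finally show ?thesis
    by simp
qed

lemma Min_insert_insert_greaterThanLessThan: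
  fixes m q :: nat
  assumes "m < q" "F \<subseteq> {m<..<q}"
  shows "Min (insert m (insert q F)) = m"
proof (rule Min_eqI)
  show "finite (insert m (insert q F))"
    using assms(2) by (simp add: finite_subset)
qed (use assms in auto)

lemma admissible_top_rows_eq_image:
  fixes q :: nat and S :: "nat set"
  assumes q: "q \<notin> S"
  shows "{R. admissible_top_row q S R} =
    (\<lambda>(m, F). insert m (insert q F)) ` (SIGMA m:{m. m \<in> S \<and> 1 \<le> m \<and> m < q}. Pow ({m<..<q} - S))"
proof (intro set_eqI iffI)
  fix R
  assume "R \<in> {R. admissible_top_row q S R}"
  then have R: "R \<subseteq> {1..q}" "q \<in> R" "Min R \<in> S" "\<forall>j\<in>R. j \<noteq> Min R \<longrightarrow> j \<notin> S"
    unfolding admissible_top_row_def by auto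
  have fin: "finite R"
    using R(1) finite_subset by blast
  have mR: "Min R \<in> R"
    using Min_in[OF fin] R(2) by blast
  have mle: "\<And>j. j \<in> R \<Longrightarrow> Min R \<le> j"
    using fin by simp
  have mq: "Min R < q"
    using mle[OF R(2)] R(3) q by (cases "Min R = q") auto
  have m1: "1 \<le> Min R"
    using R(1) mR by auto
  let ?F = "R - {Min R, q}"
  have F: "?F \<subseteq> {Min R<..<q} - S"
  proof
    fix f
    assume f: "f \<in> ?F"
    then have "Min R \<le> f" "f \<le> q" "f \<notin> S"
      using mle R(1) R(4) by auto
    then show "f \<in> {Min R<..<q} - S"
      using f by auto
  qed
  have "R = insert (Min R) (insert q ?F)"
    using mR R(2) by auto
  then show "R \<in> (\<lambda>(m, F). insert m (insert q F)) `
      (SIGMA m:{m. m \<in> S \<and> 1 \<le> m \<and> m < q}. Pow ({m<..<q} - S))"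
    using F mq m1 R(3) by (intro image_eqI[of _ _ "(Min R, ?F)"]) auto
next
  fix R
  assume "R \<in> (\<lambda>(m, F). insert m (insert q F)) `
      (SIGMA m:{m. m \<in> S \<and> 1 \<le> m \<and> m < q}. Pow ({m<..<q} - S))"
  then obtain m F where mF: "R = insert m (insert q F)" "m \<in> S" "1 \<le> m" "m < q" "F \<subseteq> {m<..<q} - S"
    by auto
  have Min: "Min R = m"
    using Min_insert_insert_greaterThanLessThan[of m q F] mF by auto
  show "R \<in> {R. admissible_top_row q S R}"
    unfolding admissible_top_row_def using mF Min q by auto
qed

lemma inj_on_admissible_top_row_param:
  fixes q :: nat
  shows "inj_on (\<lambda>(m, F). insert m (insert q F)) (SIGMA m:{m. m \<in> S \<and> 1 \<le> m \<and> m < q}. Pow ({m<..<q} - S))"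
proof (rule inj_on_inverseI[where g = "\<lambda>R. (Min R, R - {Min R, q})"])
  fix x
  assume "x \<in> (SIGMA m:{m. m \<in> S \<and> 1 \<le> m \<and> m < q}. Pow ({m<..<q} - S))"
  then obtain m F where "x = (m, F)" "m < q" "F \<subseteq> {m<..<q}"
    by auto
  then show "(\<lambda>R. (Min R, R - {Min R, q})) ((\<lambda>(m, F). insert m (insert q F)) x) = x"
    using Min_insert_insert_greaterThanLessThan[of m q F] by auto
qed

lemma sum_admissible_top_row_weights:
  fixes q :: nat and S :: "nat set"
  assumes q: "2 \<le> q" "q \<notin> S" and S: "1 \<in> S"
  shows "(\<Sum>R\<in>{R. admissible_top_row q S R}. 1 / (\<Prod>f\<in>R - S - {q}. real f - 1)) = real q - 1"
proof -
  let ?g = "\<lambda>(m, F). insert m (insert q F)"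
  let ?M = "{m. m \<in> S \<and> 1 \<le> m \<and> m < q}"
  let ?Sig = "SIGMA m:?M. Pow ({m<..<q} - S)"
  have finM: "finite ?M"
    by (rule finite_subset[of _ "{..<q}"]) auto
  have "(\<Sum>R\<in>{R. admissible_top_row q S R}. 1 / (\<Prod>f\<in>R - S - {q}. real f - 1))
      = (\<Sum>R\<in>?g ` ?Sig. 1 / (\<Prod>f\<in>R - S - {q}. real f - 1))"
    using admissible_top_rows_eq_image[OF q(2)] by simp
  also have "\<dots> = (\<Sum>x\<in>?Sig. 1 / (\<Prod>f\<in>?g x - S - {q}. real f - 1))"
    by (rule sum.reindex[OF inj_on_admissible_top_row_param, unfolded comp_def])
  also have "\<dots> = (\<Sum>x\<in>?Sig. 1 / (\<Prod>f\<in>snd x. real f - 1))"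
  proof (rule sum.cong[OF refl])
    fix x
    assume "x \<in> ?Sig"
    then obtain m F where x: "x = (m, F)" "m \<in> S" "F \<subseteq> {m<..<q} - S"
      by auto
    then have "?g x - S - {q} = F"
      using q(2) by auto
    then show "1 / (\<Prod>f\<in>?g x - S - {q}. real f - 1) = 1 / (\<Prod>f\<in>snd x. real f - 1)"
      using x by simp
  qed
  also have "\<dots> = (\<Sum>m\<in>?M. \<Sum>F\<in>Pow ({m<..<q} - S). 1 / (\<Prod>f\<in>F. real f - 1))"
    by (rule sum.Sigma[symmetric, unfolded split_def]) (use finM in auto)
  also have "\<dots> = (\<Sum>m\<in>?M. \<Prod>a\<in>{m<..<q} - S. real a / (real a - 1))"
    by (rule sum.cong[OF refl], rule sum_Pow_inverse_prod) auto
  also have "\<dots> = real q - 1"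
    by (rule sum_prod_ratio_telescope[OF q(1) S])
  finally show ?thesis .
qed

lemma ud_forest_one: "1 \<in> S \<Longrightarrow> {C. ud_forest 1 S C} = {{(1, 1)}}"
proof (intro set_eqI iffI)
  fix C
  assume "C \<in> {C. ud_forest 1 S C}"
  then have C: "ud_forest 1 S C"
    by simp
  have "(1, 1) \<in> C"
    using ud_forest_antidiagonal[OF C, of 1] by simp
  moreover have "C \<subseteq> {(1, 1)}"
    using ud_forest_cell[OF C] by fastforce
  ultimately show "C \<in> {{(1, 1)}}"
    by blast
next
  fix C :: "(nat \<times> nat) set"
  assume "C \<in> {{(1, 1)}}" "1 \<in> S"
  moreover have "ud_forest 1 S {(1, 1)}" if "1 \<in> S"
    by (rule ud_forestI) (use that in auto)
  ultimately show "C \<in> {C. ud_forest 1 S C}"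
    by simp
qed

lemma admissible_top_row_forced:
  assumes "1 \<le> p" "p \<in> S"
  shows "{R. admissible_top_row p S R} = {{p}}"
proof (intro set_eqI iffI)
  fix R
  assume "R \<in> {R. admissible_top_row p S R}"
  then have R: "R \<subseteq> {1..p}" "p \<in> R" "Min R \<in> S" "\<forall>j \<in> R. j \<noteq> Min R \<longrightarrow> j \<notin> S"
    unfolding admissible_top_row_def by auto
  then have "finite R"
    by (meson finite_atLeastAtMost finite_subset)
  have "Min R = p"
    using R(2,4) assms(2) by metis
  then have "R \<subseteq> {p}"
    using R(1) Min_le[OF \<open>finite R\<close>] by fastforce
  then show "R \<in> {{p}}"
    using R(2) by auto
qed (use assms in \<open>auto simp: admissible_top_row_def\<close>)

lemma admissible_top_row_new_columns:
  assumes "admissible_top_row (Suc p) S R"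
  shows "R - S - {Suc p} \<subseteq> {2..p}"
proof
  fix j
  assume j: "j \<in> R - S - {Suc p}"
  have R: "R \<subseteq> {1..Suc p}" "Suc p \<in> R" "Min R \<in> S"
    using assms unfolding admissible_top_row_def by auto
  then have "finite R"
    by (meson finite_atLeastAtMost finite_subset)
  then have "Min R < j"
    using j R(3) Min_le[of R j] by (metis DiffD1 DiffD2 le_neq_implies_less)
  moreover have "1 \<le> Min R"
    using R(1,2) Min_in[OF \<open>finite R\<close>] by fastforce
  ultimately show "j \<in> {2..p}"
    using j R(1) by auto
qed

lemma prod_admissible_top_row_split:
  assumes "admissible_top_row (Suc p) S R"
  shows "(\<Prod>s \<in> (S \<union> R) \<inter> {2..p}. real s - 1)
    = (\<Prod>s \<in> S \<inter> {2..p}. real s - 1) * (\<Prod>s \<in> R - S - {Suc p}. real s - 1)"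
proof -
  have split: "(S \<union> R) \<inter> {2..p} = S \<inter> {2..p} \<union> (R - S - {Suc p})"
    using admissible_top_row_new_columns[OF assms] by auto
  have "finite (R - S - {Suc p})"
    using admissible_top_row_new_columns[OF assms] by (rule finite_subset) simp
  then show ?thesis
    unfolding split by (intro prod.union_disjoint) auto
qed

lemma card_ud_forest_step:
  assumes IH: "\<And>X. 1 \<in> X \<Longrightarrow>
      real (card {C. ud_forest p X C}) * (\<Prod>s \<in> X \<inter> {2..p}. real s - 1) = fact (p - 1)"
    and p: "1 \<le> p" and S: "1 \<in> S" "Suc p \<notin> S"
  shows "real (card {C. ud_forest (Suc p) S C}) * (\<Prod>s \<in> S \<inter> {2..Suc p}. real s - 1) = fact p"
proof -
  define P where "P X = (\<Prod>s \<in> X \<inter> {2..p}. real s - 1)" for X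
  have P_pos: "P X > 0" for X
    unfolding P_def by (rule prod_pos) auto
  have "S \<inter> {2..Suc p} = S \<inter> {2..p}"
    using S(2) by (auto simp: le_Suc_eq)
  then have "real (card {C. ud_forest (Suc p) S C}) * (\<Prod>s \<in> S \<inter> {2..Suc p}. real s - 1)
      = (\<Sum>R \<in> {R. admissible_top_row (Suc p) S R}. real (card {C. ud_forest p (S \<union> R) C}) * P S)"
    using card_ud_forest_by_top_row[of "Suc p" S] p unfolding P_def by (simp add: sum_distrib_right)
  also have "\<dots> = (\<Sum>R \<in> {R. admissible_top_row (Suc p) S R}.
      fact (p - 1) * (1 / (\<Prod>s \<in> R - S - {Suc p}. real s - 1)))"
  proof (rule sum.cong)
    fix R
    assume R: "R \<in> {R. admissible_top_row (Suc p) S R}"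
    then have "P (S \<union> R) = P S * (\<Prod>s \<in> R - S - {Suc p}. real s - 1)"
      unfolding P_def by (simp add: prod_admissible_top_row_split)
    moreover have "(\<Prod>s \<in> R - S - {Suc p}. real s - 1) > 0"
      using admissible_top_row_new_columns[of p S R] R by (intro prod_pos) auto
    ultimately show "real (card {C. ud_forest p (S \<union> R) C}) * P S
        = fact (p - 1) * (1 / (\<Prod>s \<in> R - S - {Suc p}. real s - 1))"
      using IH[of "S \<union> R"] P_pos[of "S \<union> R"] P_pos[of S] S(1) unfolding P_def[symmetric]
      by (simp add: field_simps)
  qed simp
  also have "\<dots> = fact (p - 1) *
      (\<Sum>R \<in> {R. admissible_top_row (Suc p) S R}. 1 / (\<Prod>s \<in> R - S - {Suc p}. real s - 1))"
    by (simp only: sum_distrib_left)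
  also have "(\<Sum>R \<in> {R. admissible_top_row (Suc p) S R}. 1 / (\<Prod>s \<in> R - S - {Suc p}. real s - 1))
      = real (Suc p) - 1"
    by (rule sum_admissible_top_row_weights) (use p S in simp_all)
  also have "fact (p - 1) * (real (Suc p) - 1) = fact p"
    using p fact_reduce[of p, where 'a = real] by (simp add: mult.commute)
  finally show ?thesis .
qed

text \<open>Equivalently, the number of forests is the product of j - 1 over the columns j in
  {2..p} that are not in S.\<close>
lemma card_ud_forest:
  assumes "1 \<le> p" "1 \<in> S"
  shows "real (card {C. ud_forest p S C}) * (\<Prod>s \<in> S \<inter> {2..p}. real s - 1) = fact (p - 1)"
  using assms
proof (induction p arbitrary: S rule: nat_induct_at_least)
  case base
  then show ?case
    using ud_forest_one by simp
next
  case (Suc p)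
  show ?case
  proof (cases "Suc p \<in> S")
    case True
    have "card {C. ud_forest (Suc p) S C} = card {C. ud_forest p (S \<union> {Suc p}) C}"
      using card_ud_forest_by_top_row[of "Suc p" S] admissible_top_row_forced[OF _ True] Suc.hyps
      by simp
    moreover have "S \<inter> {2..Suc p} = insert (Suc p) (S \<inter> {2..p})"
      and "(S \<union> {Suc p}) \<inter> {2..p} = S \<inter> {2..p}"
      using True Suc.hyps by auto
    moreover have "fact (Suc p - 1) = real p * fact (p - 1)"
      using Suc.hyps fact_reduce[of p, where 'a = real] by simp
    ultimately show ?thesis
      using Suc.IH[of "S \<union> {Suc p}"] Suc.prems by (simp add: field_simps)
  next
    case False
    then show ?thesis
      using card_ud_forest_step[OF Suc.IH] Suc.hyps Suc.prems by simp
  qed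
qed

lemma card_ud_avoiding_0: "1 \<le> n \<Longrightarrow> card (ud_avoiding n 0) = fact (n - 1)"
proof -
  assume n: "1 \<le> n"
  have "{1::nat} \<inter> {2..n} = {}"
    by auto
  then have "real (card {C. ud_forest n {1} C}) = fact (n - 1)"
    using card_ud_forest[OF n, of "{1}"] by simp
  moreover have "ud_avoiding n 0 = {C. ud_forest n {1} C}"
    using ud_shape_iff_ud_forest[OF n] by (simp add: ud_avoiding_def)
  ultimately show ?thesis
    by (metis of_nat_eq_iff of_nat_fact)
qed

section \<open>The recurrences\<close>

lemma sum_sum_lessThan_pred:
  fixes a :: "nat \<Rightarrow> 'a::comm_semiring_1"
  shows "(\<Sum>k<m. \<Sum>j<k - 1. a j) = (\<Sum>j<m - 2. of_nat (m - 2 - j) * a j)"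
proof (induction m)
  case 0
  show ?case
    by simp
next
  case (Suc m)
  have step: "(\<Sum>j<m - 1. of_nat (m - 1 - j) * a j)
      = (\<Sum>j<m - 2. of_nat (m - 2 - j) * a j) + (\<Sum>j<m - 1. a j)"
  proof (cases "m < 2")
    case True
    then show ?thesis
      by simp
  next
    case False
    have "(\<Sum>j<m - 1. of_nat (m - 1 - j) * a j) = (\<Sum>j<m - 1. of_nat (m - 2 - j) * a j + a j)"
    proof (rule sum.cong)
      fix j
      assume "j \<in> {..<m - 1}"
      then have "m - 1 - j = Suc (m - 2 - j)"
        using False by auto
      then show "of_nat (m - 1 - j) * a j = of_nat (m - 2 - j) * a j + a j"
        by (simp add: algebra_simps)
    qed simp
    also have "\<dots> = (\<Sum>j<m - 1. of_nat (m - 2 - j) * a j) + (\<Sum>j<m - 1. a j)"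
      by (rule sum.distrib)
    also have "(\<Sum>j<m - 1. of_nat (m - 2 - j) * a j) = (\<Sum>j<m - 2. of_nat (m - 2 - j) * a j)"
    proof -
      have "m - 1 = Suc (m - 2)"
        using False by simp
      then show ?thesis
        by simp
    qed
    finally show ?thesis .
  qed
  have "Suc m - 2 = m - 1"
    by simp
  then show ?case
    using Suc.IH step by (simp add: add.commute)
qed

lemma sum_int_atLeastAtMost:
  fixes g :: "int \<Rightarrow> 'a::comm_monoid_add"
  shows "(\<Sum>j\<in>{int a..int b}. g j) = (\<Sum>j\<in>{a..b}. g (int j))"
proof -
  have "(\<Sum>j\<in>{int a..int b}. g j) = (\<Sum>j\<in>int ` {a..b}. g j)"
    by (simp add: image_int_atLeastAtMost)
  also have "\<dots> = (\<Sum>j\<in>{a..b}. g (int j))"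
    by (rule sum.reindex_cong[of int]) (auto simp: inj_on_def)
  finally show ?thesis .
qed

lemma sum_int_atLeast0_lessThan:
  fixes g :: "int \<Rightarrow> 'a::comm_monoid_add"
  shows "(\<Sum>j\<in>{0..<int b}. g j) = (\<Sum>j<b. g (int j))"
proof -
  have "(\<Sum>j\<in>{0..<int b}. g j) = (\<Sum>j\<in>int ` {0..<b}. g j)"
    by (simp add: image_int_atLeastLessThan)
  also have "\<dots> = (\<Sum>j\<in>{0..<b}. g (int j))"
    by (rule sum.reindex_cong[of int]) (auto simp: inj_on_def)
  finally show ?thesis
    by (simp add: atLeast0LessThan)
qed

lemma f_eq_card_cherry:
  "j + 2 \<le> n \<Longrightarrow> f n (int j) = card {T \<in> ud_avoiding n j. (j + 1, n - j - 1) \<in> T}"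
  unfolding f_def ud_avoiding_def by (simp add: is_upper_diagonal_CNM_iff_ud_shape conj_assoc)

lemma f_last_eq_card_ud_avoiding: "1 \<le> n \<Longrightarrow> f n (int n - 1) = card (ud_avoiding n (n - 1))"
  unfolding f_def ud_avoiding_def by (simp add: is_upper_diagonal_CNM_iff_ud_shape)

lemma f_minus_one [simp]: "f n (-1) = 0"
  unfolding f_def by simp

lemma card_ud_avoiding_split:
  "card (ud_avoiding n j) =
    card {T \<in> ud_avoiding n j. (j + 1, n - j - 1) \<in> T} + card (ud_avoiding n (Suc j))"
proof -
  let ?C = "{T. (j + 1, n - j - 1) \<in> T}"
  have "finite (ud_avoiding n j)"
    using finite_ud_shape by (rule finite_subset[rotated]) (auto simp: ud_avoiding_def)
  then have "card (ud_avoiding n j) = card (ud_avoiding n j \<inter> ?C) + card (ud_avoiding n j - ?C)"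
    by (rule card_Int_Diff)
  moreover have "ud_avoiding n j - ?C = ud_avoiding n (Suc j)"
    by (auto simp: ud_avoiding_def atLeastAtMostSuc_conv)
  ultimately show ?thesis
    by (simp add: Int_def)
qed

lemma sum_f_eq_card_ud_avoiding:
  assumes m: "1 \<le> m" and "a \<le> m - 1"
  shows "(\<Sum>j \<in> {a..m - 1}. f m (int j)) = card (ud_avoiding m a)"
  using \<open>a \<le> m - 1\<close>
proof (induction a rule: inc_induct)
  case base
  have "int (m - 1) = int m - 1"
    using m by simp
  then show ?case
    using f_last_eq_card_ud_avoiding[OF m] by simp
next
  case (step a)
  have "{a..m - 1} = insert a {Suc a..m - 1}"
    using step.hyps by auto
  then have "(\<Sum>j \<in> {a..m - 1}. f m (int j)) = f m (int a) + (\<Sum>j \<in> {Suc a..m - 1}. f m (int j))"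
    by simp
  also have "f m (int a) = card {T \<in> ud_avoiding m a. (a + 1, m - a - 1) \<in> T}"
    using step.hyps by (intro f_eq_card_cherry) auto
  finally show ?case
    using step.IH card_ud_avoiding_split[of m a] by linarith
qed

lemma f_Suc_eq_card_ud_avoiding: "k < m \<Longrightarrow> f (Suc m) (int k) = card (ud_avoiding m (k - 1))"
  using f_eq_card_cherry[of k "Suc m"] card_ud_avoiding_with_cherry by simp

lemma sum_f_int_from_pred:
  "(\<Sum>j \<in> {int a - 1 .. int b}. f m j) = (\<Sum>j \<in> {a - 1..b}. f m (int j))"
proof (cases "a = 0")
  case True
  then have "{int a - 1 .. int b} = insert (-1) {0 .. int b}"
    by auto
  then have "(\<Sum>j \<in> {int a - 1 .. int b}. f m j) = (\<Sum>j \<in> {0 .. int b}. f m j)"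
    by simp
  then show ?thesis
    using True sum_int_atLeastAtMost[of "f m" 0 b] by simp
next
  case False
  then have "int a - 1 = int (a - 1)"
    by (simp add: of_nat_diff)
  show ?thesis
    unfolding \<open>int a - 1 = int (a - 1)\<close> by (rule sum_int_atLeastAtMost)
qed

lemma f_recurrence_cherry:
  assumes n: "3 \<le> n" and k: "0 \<le> k" "k < int n - 1"
  shows "f n k = (\<Sum>j \<in> {k - 1 .. int n - 2}. f (n - 1) j)"
proof -
  obtain k' where k': "k = int k'"
    using k(1) nonneg_eq_int by blast
  obtain m where n_eq: "n = Suc m"
    using n by (cases n) auto
  have "k' < m" "2 \<le> m"
    using n k k' n_eq by auto
  then have "f n k = card (ud_avoiding m (k' - 1))"
    using k' n_eq f_Suc_eq_card_ud_avoiding by simp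
  also have "\<dots> = (\<Sum>j \<in> {k' - 1..m - 1}. f m (int j))"
    by (rule sum_f_eq_card_ud_avoiding[symmetric]) (use \<open>k' < m\<close> in auto)
  also have "\<dots> = (\<Sum>j \<in> {int k' - 1 .. int (m - 1)}. f m j)"
    by (rule sum_f_int_from_pred[symmetric])
  also have "{int k' - 1 .. int (m - 1)} = {k - 1 .. int n - 2}"
    using k' n_eq \<open>2 \<le> m\<close> by auto
  finally show ?thesis
    using n_eq by simp
qed

lemma card_ud_avoiding_0_split:
  assumes "1 \<le> m" "b \<le> m - 1"
  shows "card (ud_avoiding m 0) = (\<Sum>j<b. f m (int j)) + card (ud_avoiding m b)"
proof -
  have "{0..m - 1} = {..<b} \<union> {b..m - 1}"
    using assms by auto
  then have "(\<Sum>j \<in> {0..m - 1}. f m (int j)) = (\<Sum>j<b. f m (int j)) + (\<Sum>j \<in> {b..m - 1}. f m (int j))"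
    by (simp add: sum.union_disjoint ivl_disj_int_one(4))
  then show ?thesis
    using sum_f_eq_card_ud_avoiding[of m 0] sum_f_eq_card_ud_avoiding[of m b] assms by simp
qed

lemma f_last_eq_sum_sum:
  assumes m: "2 \<le> m"
  shows "f (Suc m) (int m) = (\<Sum>k<m. \<Sum>j<k - 1. f m (int j))"
proof -
  have "card (ud_avoiding (Suc m) 0) = (\<Sum>j \<in> insert m {..<m}. f (Suc m) (int j))"
    using sum_f_eq_card_ud_avoiding[of "Suc m" 0]
    by (simp add: atLeast0AtMost lessThan_Suc_atMost[symmetric])
  also have "\<dots> = (\<Sum>k<m. card (ud_avoiding m (k - 1))) + f (Suc m) (int m)"
    by (simp add: f_Suc_eq_card_ud_avoiding)
  finally have total:
    "card (ud_avoiding (Suc m) 0) = (\<Sum>k<m. card (ud_avoiding m (k - 1))) + f (Suc m) (int m)" .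
  have "card (ud_avoiding (Suc m) 0) = m * fact (m - 1)"
    using card_ud_avoiding_0[of "Suc m"] m by (simp add: fact_reduce)
  also have "\<dots> = (\<Sum>k<m. card (ud_avoiding m 0))"
    using card_ud_avoiding_0[of m] m by simp
  also have "\<dots> = (\<Sum>k<m. (\<Sum>j<k - 1. f m (int j)) + card (ud_avoiding m (k - 1)))"
    using m by (intro sum.cong card_ud_avoiding_0_split) auto
  also have "\<dots> = (\<Sum>k<m. \<Sum>j<k - 1. f m (int j)) + (\<Sum>k<m. card (ud_avoiding m (k - 1)))"
    by (rule sum.distrib)
  finally show ?thesis
    using total by linarith
qed

lemma f_recurrence_last:
  assumes n: "3 \<le> n"
  shows "int (f n (int n - 1)) = (\<Sum>j \<in> {0 .. int n - 4}. (int n - 3 - j) * int (f (n - 1) j))"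
proof -
  obtain m where n_eq: "n = Suc m" and m: "2 \<le> m"
    using n by (metis Suc_le_D Suc_le_mono numeral_3_eq_3 numeral_2_eq_2)
  have "int (f n (int n - 1)) = (\<Sum>k<m. \<Sum>j<k - 1. int (f m (int j)))"
    using f_last_eq_sum_sum[OF m] n_eq by simp
  also have "\<dots> = (\<Sum>j<m - 2. int (m - 2 - j) * int (f m (int j)))"
    by (rule sum_sum_lessThan_pred)
  also have "\<dots> = (\<Sum>j<m - 2. (int n - 3 - int j) * int (f (n - 1) (int j)))"
    by (rule sum.cong) (auto simp: n_eq)
  also have "\<dots> = (\<Sum>j \<in> {0..<int (m - 2)}. (int n - 3 - j) * int (f (n - 1) j))"
    by (rule sum_int_atLeast0_lessThan[symmetric])
  also have "{0..<int (m - 2)} = {0 .. int n - 4}"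
    using n_eq m by auto
  finally show ?thesis .
qed

theorem theorem4p6:
  fixes n :: nat
  assumes "n \<ge> 3"
  shows "(\<forall>k::int. 0 \<le> k \<and> k < int n - 1 \<longrightarrow>
            f n k = (\<Sum>j \<in> {k - 1 .. int n - 2}. f (n - 1) j))
       \<and> int (f n (int n - 1)) =
            (\<Sum>j \<in> {0 .. int n - 4}. (int n - 3 - j) * int (f (n - 1) j))"
  using f_recurrence_cherry[OF assms] f_recurrence_last[OF assms] by blast

end
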